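(* Let $A\in\Omega_n$ be non-derogatory and $B\in\mathcal M_n$ with $\kappa_{\Omega_n}(A;B)=0$. Then there is a holomorphic mapping $\varphi:\mathbb C\to\Omega_n$ with $\varphi(0)=A$, $\varphi'(0)=B$, and $sp(\varphi(\lambda))=sp(A)$ for every $\lambda\in\mathbb C$.
   Context: $\mathcal M_n$ is the space of complex $n\times n$ matrices (identified with $\mathbb C^{n^2}$); $sp(A)$ is the spectrum of $A$ and $r(A)$ its spectral radius; $\Omega_n=\{A\in\mathcal M_n: r(A)<1\}$. A matrix is non-derogatory if its characteristic and minimal polynomials coincide. $\mathbb D$ is the open unit disc. For a domain $D\subset\mathbb C^m$, $\kappa_D(z;X)=\inf\{|\alpha|:\exists\varphi\in\mathcal O(\mathbb D,D),\ \varphi(0)=z,\ \alpha\varphi'(0)=X\}$ is the Kobayashi–Royden pseudometric. *)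

theory Defs
  imports "HOL-Analysis.Analysis" "Jordan_Normal_Form.Spectral_Radius"
begin

text \<open>Complex n x n matrices are JNF matrices in carrier_mat n n.
  sp(A) is spectrum A (set of eigenvalues), r(A) is spectral_radius A.\<close>

definition Omega :: "nat \<Rightarrow> complex mat set" where
  "Omega n = {A \<in> carrier_mat n n. spectral_radius A < 1}"

definition poly_at_mat :: "complex poly \<Rightarrow> complex mat \<Rightarrow> complex mat" where
  "poly_at_mat p A = mat (dim_row A) (dim_col A)
     (\<lambda>(i,j). \<Sum>k\<le>degree p. coeff p k * (A ^\<^sub>m k) $$ (i,j))"

definition minimal_poly :: "complex mat \<Rightarrow> complex poly" where
  "minimal_poly A = (THE p. lead_coeff p = 1 \<and> poly_at_mat p A = 0\<^sub>m (dim_row A) (dim_row A) \<and>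
     (\<forall>q. q \<noteq> 0 \<and> poly_at_mat q A = 0\<^sub>m (dim_row A) (dim_row A) \<longrightarrow> degree p \<le> degree q))"

definition non_derogatory :: "complex mat \<Rightarrow> bool" where
  "non_derogatory A \<longleftrightarrow> char_poly A = minimal_poly A"

text \<open>Holomorphy of a matrix-valued map (identifying M_n with C^(n^2)): all entries holomorphic.\<close>
definition mat_holomorphic_on :: "nat \<Rightarrow> (complex \<Rightarrow> complex mat) \<Rightarrow> complex set \<Rightarrow> bool" where
  "mat_holomorphic_on n \<phi> S \<longleftrightarrow> (\<forall>i<n. \<forall>j<n. (\<lambda>z. \<phi> z $$ (i,j)) holomorphic_on S)"

definition mat_deriv :: "nat \<Rightarrow> (complex \<Rightarrow> complex mat) \<Rightarrow> complex \<Rightarrow> complex mat" where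
  "mat_deriv n \<phi> z = mat n n (\<lambda>(i,j). deriv (\<lambda>w. \<phi> w $$ (i,j)) z)"

text \<open>Kobayashi--Royden pseudometric of a domain D of n x n matrices (infimum of empty set = infinity).\<close>
definition kobayashi :: "nat \<Rightarrow> complex mat set \<Rightarrow> complex mat \<Rightarrow> complex mat \<Rightarrow> ereal" where
  "kobayashi n D z X = (INF \<alpha> \<in> {\<alpha>. \<exists>\<phi>. mat_holomorphic_on n \<phi> (ball 0 1) \<and> \<phi> ` ball 0 1 \<subseteq> D \<and>
       \<phi> 0 = z \<and> \<alpha> \<cdot>\<^sub>m mat_deriv n \<phi> 0 = X}. ereal (cmod \<alpha>))"

end

theory Submission
  imports Defs "HOL-Computational_Algebra.Polynomial_Factorial" "HOL-Computational_Algebra.Field_as_Ring"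
    "HOL-Complex_Analysis.Cauchy_Integral_Formula"
begin

text \<open>If \<open>\<kappa>(A; B) = 0\<close>, then \<open>tr (A\<^sup>s B) = 0\<close> for every \<open>s\<close>: along an analytic disc \<open>\<phi>\<close> in
  \<open>\<Omega>\<^sub>n\<close> through \<open>A\<close> with \<open>\<alpha> \<phi>'(0) = B\<close>, the function \<open>w \<mapsto> tr \<phi>(w)\<^sup>s\<^sup>+\<^sup>1\<close> is bounded by \<open>n\<close>
  because all eigenvalues lie in the unit disc, so Cauchy's estimate bounds \<open>(s + 1) tr (A\<^sup>s \<phi>'(0))\<close>
  by \<open>2n\<close>, and \<open>\<alpha>\<close> can be taken arbitrarily small.
  A non-derogatory \<open>A\<close> has a cyclic vector, and in the corresponding Krylov basis it is a companion
  matrix; for companion matrices the trace conditions are exactly what is needed to solve the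
  commutator equation \<open>X A - A X = B\<close>.  Finally, for an entire curve \<open>S\<close> of invertible matrices with
  \<open>S(0) = 1\<close> and \<open>S'(0) = X\<close>, the curve \<open>\<phi>(w) = S(w) A S(w)\<^sup>-\<^sup>1\<close> is isospectral to \<open>A\<close> and has
  \<open>\<phi>'(0) = X A - A X = B\<close>.\<close>

lemma index_mult_mat_sum:
  assumes "A \<in> carrier_mat n m" "B \<in> carrier_mat m k" "i < n" "j < k"
  shows "(A * B) $$ (i,j) = (\<Sum>l<m. A $$ (i,l) * B $$ (l,j))"
  using assms by (auto simp: scalar_prod_def lessThan_atLeast0)

lemma square_mult_carrier_mat:
  "A \<in> carrier_mat n n \<Longrightarrow> B \<in> carrier_mat n n \<Longrightarrow> A * B \<in> carrier_mat n n"
  by simp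

lemma mult_inverse_cancel_left:
  fixes P :: "'a :: semiring_1 mat"
  assumes "P \<in> carrier_mat n n" "Q \<in> carrier_mat n n" "P * Q = 1\<^sub>m n" "M \<in> carrier_mat n m"
  shows "P * (Q * M) = M"
  using assms by (simp add: assoc_mult_mat[symmetric, of P n n Q n M m])

lemma pow_mat_add:
  assumes "A \<in> carrier_mat n n"
  shows "A ^\<^sub>m (a + b) = A ^\<^sub>m a * A ^\<^sub>m b"
proof (induction b)
  case 0 then show ?case using assms by simp
next
  case (Suc b)
  then show ?case using assms by (simp add: assoc_mult_mat[of _ n n _ n _ n])
qed

lemma pow_mat_Suc_left:
  assumes "A \<in> carrier_mat n n"
  shows "A ^\<^sub>m (Suc k) = A * A ^\<^sub>m k"
  using pow_mat_add[OF assms, of 1 k] assms by simp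

lemma pow_mat_commute:
  assumes "A \<in> carrier_mat n n"
  shows "A ^\<^sub>m a * A ^\<^sub>m b = A ^\<^sub>m b * A ^\<^sub>m a"
  using pow_mat_add[OF assms, of a b] pow_mat_add[OF assms, of b a] by (simp add: add.commute)

lemma commute_pow_mat:
  assumes A: "A \<in> carrier_mat n n" and M: "M \<in> carrier_mat n n" and c: "M * A = A * M"
  shows "M * A ^\<^sub>m k = A ^\<^sub>m k * M"
proof (induction k)
  case 0 then show ?case using A M by simp
next
  case (Suc k)
  have "M * A ^\<^sub>m Suc k = (M * A ^\<^sub>m k) * A" using A M by (simp add: assoc_mult_mat[of _ n n _ n _ n])
  also have "\<dots> = A ^\<^sub>m k * (M * A)" using Suc A M by (simp add: assoc_mult_mat[of _ n n _ n _ n])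
  also have "\<dots> = A ^\<^sub>m Suc k * M" using c A M by (simp add: assoc_mult_mat[of _ n n _ n _ n])
  finally show ?case .
qed

lemma sum_triangle_swap:
  "(\<Sum>k<n. \<Sum>m\<in>{Suc k..n}. F k m) = (\<Sum>m\<le>n. \<Sum>k<m. F k m :: 'a::comm_monoid_add)"
proof -
  have "(\<Sum>k<n. \<Sum>m\<in>{Suc k..n}. F k m) = (\<Sum>k<n. \<Sum>m\<le>n. if k < m then F k m else 0)"
  proof (rule sum.cong[OF refl])
    fix k
    have e: "{m\<in>{..n}. k<m} = {Suc k..n}" by auto
    show "(\<Sum>m\<in>{Suc k..n}. F k m) = (\<Sum>m\<le>n. if k < m then F k m else 0)"
      using sum.inter_filter[of "{..n}" "F k" "\<lambda>m. k<m"] e by simp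
  qed
  also have "\<dots> = (\<Sum>m\<le>n. \<Sum>k<n. if k < m then F k m else 0)" by (rule sum.swap)
  also have "\<dots> = (\<Sum>m\<le>n. \<Sum>k<m. F k m)"
  proof (rule sum.cong[OF refl])
    fix m assume "m \<in> {..n}"
    then have e: "{k\<in>{..<n}. k<m} = {..<m}" by auto
    then show "(\<Sum>k<n. if k < m then F k m else 0) = (\<Sum>k<m. F k m)"
      using sum.inter_filter[of "{..<n}" "\<lambda>k. F k m" "\<lambda>k. k<m"] by simp
  qed
  finally show ?thesis .
qed

lemma adj_mat_inverse:
  fixes P :: "'a :: field mat"
  assumes P: "P \<in> carrier_mat n n" and d: "det P \<noteq> 0"
  shows "P * ((1 / det P) \<cdot>\<^sub>m adj_mat P) = 1\<^sub>m n" and "((1 / det P) \<cdot>\<^sub>m adj_mat P) * P = 1\<^sub>m n"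
proof -
  have adj: "adj_mat P \<in> carrier_mat n n" "P * adj_mat P = det P \<cdot>\<^sub>m 1\<^sub>m n" "adj_mat P * P = det P \<cdot>\<^sub>m 1\<^sub>m n"
    using adj_mat[OF P] by auto
  have "P * ((1 / det P) \<cdot>\<^sub>m adj_mat P) = (1 / det P) \<cdot>\<^sub>m (P * adj_mat P)"
    using mult_smult_distrib[OF P adj(1)] .
  also have "\<dots> = 1\<^sub>m n" unfolding adj(2) using d by (intro eq_matI) auto
  finally show "P * ((1 / det P) \<cdot>\<^sub>m adj_mat P) = 1\<^sub>m n" .
  have "((1 / det P) \<cdot>\<^sub>m adj_mat P) * P = (1 / det P) \<cdot>\<^sub>m (adj_mat P * P)"
    using mult_smult_assoc_mat[OF adj(1) P] .
  also have "\<dots> = 1\<^sub>m n" unfolding adj(3) using d by (intro eq_matI) auto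
  finally show "((1 / det P) \<cdot>\<^sub>m adj_mat P) * P = 1\<^sub>m n" .
qed

definition mat_trace :: "'a :: comm_monoid_add mat \<Rightarrow> 'a" where
  "mat_trace M = (\<Sum>i<dim_row M. M $$ (i,i))"

lemma mat_trace_carrier: "M \<in> carrier_mat n n \<Longrightarrow> mat_trace M = (\<Sum>i<n. M $$ (i,i))"
  unfolding mat_trace_def by simp

lemma mat_trace_zero [simp]: "mat_trace (0\<^sub>m n n) = 0"
  unfolding mat_trace_def by simp

lemma mat_trace_add:
  "X \<in> carrier_mat n n \<Longrightarrow> Y \<in> carrier_mat n n \<Longrightarrow> mat_trace (X + Y) = mat_trace X + mat_trace Y"
  unfolding mat_trace_def by (simp add: sum.distrib)

lemma mat_trace_smult:
  "(M :: 'a :: semiring_0 mat) \<in> carrier_mat n n \<Longrightarrow> mat_trace (c \<cdot>\<^sub>m M) = c * mat_trace M"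
  unfolding mat_trace_def by (simp add: sum_distrib_left)

lemma mat_trace_mult_comm:
  fixes A :: "'a :: comm_semiring_0 mat"
  assumes A: "A \<in> carrier_mat n m" and B: "B \<in> carrier_mat m n"
  shows "mat_trace (A * B) = mat_trace (B * A)"
proof -
  have "mat_trace (A * B) = (\<Sum>i<n. \<Sum>k<m. A $$ (i,k) * B $$ (k,i))"
    unfolding mat_trace_def using A B index_mult_mat_sum[OF A B] by (intro sum.cong) auto
  also have "\<dots> = (\<Sum>k<m. \<Sum>i<n. B $$ (k,i) * A $$ (i,k))"
    by (subst sum.swap) (simp add: mult.commute)
  also have "\<dots> = mat_trace (B * A)"
    unfolding mat_trace_def using A B index_mult_mat_sum[OF B A] by (intro sum.cong) auto
  finally show ?thesis .
qed

lemma mat_trace_similar: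
  fixes M :: "'a :: comm_semiring_1 mat"
  assumes "M \<in> carrier_mat n n" "P \<in> carrier_mat n n" "Q \<in> carrier_mat n n" and QP: "Q * P = 1\<^sub>m n"
  shows "mat_trace (P * M * Q) = mat_trace M"
proof -
  have "mat_trace (P * M * Q) = mat_trace (Q * (P * M))"
    using assms by (intro mat_trace_mult_comm) auto
  also have "Q * (P * M) = M"
    using assms by (simp add: assoc_mult_mat[symmetric, of Q n n P n M n])
  finally show ?thesis .
qed

section \<open>Polynomials evaluated at a matrix\<close>

lemma poly_at_mat_altdef:
  assumes A: "A \<in> carrier_mat n n" and N: "degree p \<le> N"
  shows "poly_at_mat p A = mat n n (\<lambda>(i,j). \<Sum>k\<le>N. coeff p k * (A ^\<^sub>m k) $$ (i,j))"
proof -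
  have "(\<Sum>k\<le>degree p. coeff p k * (A ^\<^sub>m k) $$ (i,j)) = (\<Sum>k\<le>N. coeff p k * (A ^\<^sub>m k) $$ (i,j))" for i j
    by (rule sum.mono_neutral_left) (use N in \<open>auto simp: coeff_eq_0\<close>)
  then show ?thesis unfolding poly_at_mat_def using A by auto
qed

lemma dim_poly_at_mat[simp]: "dim_row (poly_at_mat p A) = dim_row A" "dim_col (poly_at_mat p A) = dim_col A"
  unfolding poly_at_mat_def by auto

lemma poly_at_mat_carrier[simp]: "A \<in> carrier_mat n n \<Longrightarrow> poly_at_mat p A \<in> carrier_mat n n"
  unfolding poly_at_mat_def by auto

lemma index_poly_at_mat:
  assumes A: "A \<in> carrier_mat n n" and N: "degree p \<le> N" and i: "i < n" and j: "j < n"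
  shows "poly_at_mat p A $$ (i,j) = (\<Sum>k\<le>N. coeff p k * (A ^\<^sub>m k) $$ (i,j))"
  using poly_at_mat_altdef[OF A N] i j by simp

lemma poly_at_mat_0[simp]: "A \<in> carrier_mat n n \<Longrightarrow> poly_at_mat 0 A = 0\<^sub>m n n"
  unfolding poly_at_mat_def by (intro eq_matI) auto

lemma poly_at_mat_pCons:
  assumes A: "A \<in> carrier_mat n n"
  shows "poly_at_mat (pCons a p) A = a \<cdot>\<^sub>m 1\<^sub>m n + A * poly_at_mat p A"
proof (rule eq_matI)
  fix i j assume "i < dim_row (a \<cdot>\<^sub>m 1\<^sub>m n + A * poly_at_mat p A)" "j < dim_col (a \<cdot>\<^sub>m 1\<^sub>m n + A * poly_at_mat p A)"
  then have i: "i < n" and j: "j < n" using A by auto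
  define N where "N = degree p"
  have dN: "degree (pCons a p) \<le> Suc N" unfolding N_def by (simp add: degree_pCons_le)
  have "poly_at_mat (pCons a p) A $$ (i,j) = (\<Sum>k\<le>Suc N. coeff (pCons a p) k * (A ^\<^sub>m k) $$ (i,j))"
    by (rule index_poly_at_mat[OF A dN i j])
  also have "\<dots> = a * (A ^\<^sub>m 0) $$ (i,j) + (\<Sum>k\<le>N. coeff p k * (A ^\<^sub>m Suc k) $$ (i,j))"
    by (subst sum.atMost_Suc_shift) simp
  also have "(\<Sum>k\<le>N. coeff p k * (A ^\<^sub>m Suc k) $$ (i,j)) = (\<Sum>k\<le>N. coeff p k * (\<Sum>b<n. A $$ (i,b) * (A ^\<^sub>m k) $$ (b,j)))"
    using pow_mat_Suc_left[OF A] index_mult_mat_sum[OF A _ i j] A by (intro sum.cong) auto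
  also have "\<dots> = (\<Sum>b<n. A $$ (i,b) * (\<Sum>k\<le>N. coeff p k * (A ^\<^sub>m k) $$ (b,j)))"
    by (simp add: sum_distrib_left mult_ac sum.swap[of _ "{..N}"])
  also have "\<dots> = (A * poly_at_mat p A) $$ (i,j)"
  proof -
    have "(A * poly_at_mat p A) $$ (i,j) = (\<Sum>b<n. A $$ (i,b) * poly_at_mat p A $$ (b,j))"
      by (rule index_mult_mat_sum[OF A poly_at_mat_carrier[OF A] i j])
    also have "\<dots> = (\<Sum>b<n. A $$ (i,b) * (\<Sum>k\<le>N. coeff p k * (A ^\<^sub>m k) $$ (b,j)))"
      unfolding N_def by (intro sum.cong refl) (simp add: index_poly_at_mat[OF A order.refl _ j])
    finally show ?thesis by simp
  qed
  finally show "poly_at_mat (pCons a p) A $$ (i,j) = (a \<cdot>\<^sub>m 1\<^sub>m n + A * poly_at_mat p A) $$ (i,j)"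
    using A i j by simp
qed (use A in auto)

lemma poly_at_mat_add:
  assumes A: "A \<in> carrier_mat n n"
  shows "poly_at_mat (p + q) A = poly_at_mat p A + poly_at_mat q A"
proof (rule eq_matI)
  fix i j assume "i < dim_row (poly_at_mat p A + poly_at_mat q A)" "j < dim_col (poly_at_mat p A + poly_at_mat q A)"
  then have i: "i < n" and j: "j < n" using A by auto
  define N where "N = max (degree p) (degree q)"
  have N: "degree (p+q) \<le> N" "degree p \<le> N" "degree q \<le> N" unfolding N_def
    by (auto simp: degree_add_le)
  show "poly_at_mat (p + q) A $$ (i,j) = (poly_at_mat p A + poly_at_mat q A) $$ (i,j)"
    using index_poly_at_mat[OF A N(1) i j] index_poly_at_mat[OF A N(2) i j] index_poly_at_mat[OF A N(3) i j] A i j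
    by (simp add: sum.distrib algebra_simps)
qed (use A in auto)

lemma poly_at_mat_smult:
  assumes A: "A \<in> carrier_mat n n"
  shows "poly_at_mat (Polynomial.smult c p) A = c \<cdot>\<^sub>m poly_at_mat p A"
proof (rule eq_matI)
  fix i j assume "i < dim_row (c \<cdot>\<^sub>m poly_at_mat p A)" "j < dim_col (c \<cdot>\<^sub>m poly_at_mat p A)"
  then have i: "i < n" and j: "j < n" using A by auto
  have N: "degree (Polynomial.smult c p) \<le> degree p" by simp
  show "poly_at_mat (Polynomial.smult c p) A $$ (i,j) = (c \<cdot>\<^sub>m poly_at_mat p A) $$ (i,j)"
    using index_poly_at_mat[OF A N i j] index_poly_at_mat[OF A order.refl i j] A i j
    by (simp add: sum_distrib_left mult_ac)
qed (use A in auto)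

lemma poly_at_mat_mult:
  assumes A: "A \<in> carrier_mat n n"
  shows "poly_at_mat (p * q) A = poly_at_mat p A * poly_at_mat q A"
proof (induction p)
  case 0
  then show ?case using A by (simp add: left_mult_zero_mat[of _ n n])
next
  case (pCons a p)
  have "poly_at_mat (pCons a p * q) A = poly_at_mat (Polynomial.smult a q + pCons 0 (p * q)) A" by simp
  also have "\<dots> = a \<cdot>\<^sub>m poly_at_mat q A + A * (poly_at_mat p A * poly_at_mat q A)"
  proof -
    have z: "0 \<cdot>\<^sub>m 1\<^sub>m n = (0\<^sub>m n n :: complex mat)" by (intro eq_matI) auto
    show ?thesis
      using poly_at_mat_add[OF A] poly_at_mat_smult[OF A] poly_at_mat_pCons[OF A] pCons.IH z A
      by (simp add: left_add_zero_mat[of _ n n] square_mult_carrier_mat)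
  qed
  also have "\<dots> = (a \<cdot>\<^sub>m 1\<^sub>m n + A * poly_at_mat p A) * poly_at_mat q A"
    using A by (simp add: add_mult_distrib_mat[of _ n n _ _ n] assoc_mult_mat[of _ n n _ n _ n]
        mult_smult_assoc_mat[of _ n n _ n])
  also have "\<dots> = poly_at_mat (pCons a p) A * poly_at_mat q A" using poly_at_mat_pCons[OF A] by simp
  finally show ?case .
qed

lemma poly_at_mat_diff:
  assumes A: "A \<in> carrier_mat n n"
  shows "poly_at_mat (p - q) A = poly_at_mat p A - poly_at_mat q A"
proof -
  have "poly_at_mat (p - q) A = poly_at_mat (p + Polynomial.smult (-1) q) A" by simp
  also have "\<dots> = poly_at_mat p A + (-1) \<cdot>\<^sub>m poly_at_mat q A"
    by (simp only: poly_at_mat_add[OF A] poly_at_mat_smult[OF A])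
  also have "\<dots> = poly_at_mat p A - poly_at_mat q A" using A by (intro eq_matI) auto
  finally show ?thesis .
qed

lemma poly_at_mat_mult_vec:
  assumes A: "A \<in> carrier_mat n n" and v: "v \<in> carrier_vec n" and N: "degree p \<le> N" and i: "i < n"
  shows "(poly_at_mat p A *\<^sub>v v) $ i = (\<Sum>k\<le>N. coeff p k * (A ^\<^sub>m k *\<^sub>v v) $ i)"
proof -
  have "(poly_at_mat p A *\<^sub>v v) $ i = (\<Sum>j<n. poly_at_mat p A $$ (i,j) * v $ j)"
    using A v i by (auto simp: scalar_prod_def lessThan_atLeast0)
  also have "\<dots> = (\<Sum>j<n. (\<Sum>k\<le>N. coeff p k * (A ^\<^sub>m k) $$ (i,j)) * v $ j)"
    using index_poly_at_mat[OF A N i] by simp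
  also have "\<dots> = (\<Sum>k\<le>N. coeff p k * (\<Sum>j<n. (A ^\<^sub>m k) $$ (i,j) * v $ j))"
    by (simp add: sum_distrib_left sum_distrib_right mult_ac sum.swap[of _ "{..<n}"])
  also have "\<dots> = (\<Sum>k\<le>N. coeff p k * (A ^\<^sub>m k *\<^sub>v v) $ i)"
    using A v i by (auto simp: scalar_prod_def lessThan_atLeast0)
  finally show ?thesis .
qed

lemma coeff_Poly_list_of_vec:
  "c \<in> carrier_vec n \<Longrightarrow> coeff (Poly (list_of_vec c)) k = (if k < n then c $ k else 0)"
  by (auto simp: nth_default_def)

lemma degree_Poly_list_of_vec_le: "c \<in> carrier_vec n \<Longrightarrow> degree (Poly (list_of_vec c)) \<le> n"
  using degree_Poly[of "list_of_vec c"] by simp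

lemma Poly_list_of_vec_nonzero:
  assumes c: "c \<in> carrier_vec n" and "c \<noteq> 0\<^sub>v n"
  shows "Poly (list_of_vec c) \<noteq> 0"
proof
  assume "Poly (list_of_vec c) = 0"
  then have "c $ k = 0" if "k < n" for k using coeff_Poly_list_of_vec[OF c, of k] that by simp
  then have "c = 0\<^sub>v n" using c by (intro eq_vecI) auto
  with assms(2) show False by simp
qed

lemma wide_mat_kernel_nontrivial:
  fixes K :: "'a :: idom mat"
  assumes K: "K \<in> carrier_mat n (Suc n)"
  shows "\<exists>c \<in> carrier_vec (Suc n). c \<noteq> 0\<^sub>v (Suc n) \<and> K *\<^sub>v c = 0\<^sub>v n"
proof -
  define M where "M = mat (Suc n) (Suc n) (\<lambda>(a,k). if a < n then K $$ (a,k) else 0)"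
  have Mc: "M \<in> carrier_mat (Suc n) (Suc n)" unfolding M_def by simp
  have "det M = (\<Sum>p \<in> {p. p permutes {0 ..< Suc n}}. signof p * (\<Prod>a = 0 ..< Suc n. M $$ (a, p a)))"
    by (rule det_def'[OF Mc])
  also have "\<dots> = 0"
  proof (intro sum.neutral ballI)
    fix p assume p: "p \<in> {p. p permutes {0 ..< Suc n}}"
    have "p n < Suc n" using p permutes_in_image[of p "{0..<Suc n}" n] by auto
    then have "M $$ (n, p n) = 0" unfolding M_def by simp
    then have "(\<Prod>a = 0 ..< Suc n. M $$ (a, p a)) = 0" by (intro prod_zero) auto
    then show "signof p * (\<Prod>a = 0 ..< Suc n. M $$ (a, p a)) = 0" by simp
  qed
  finally obtain c where c: "c \<in> carrier_vec (Suc n)" "c \<noteq> 0\<^sub>v (Suc n)" "M *\<^sub>v c = 0\<^sub>v (Suc n)"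
    using det_0_iff_vec_prod_zero[OF Mc] by blast
  have "(K *\<^sub>v c) $ a = (M *\<^sub>v c) $ a" if "a < n" for a
    using that K c(1) unfolding M_def by (auto simp: scalar_prod_def)
  then have "K *\<^sub>v c = 0\<^sub>v n" using c(3) K by (intro eq_vecI) auto
  with c show ?thesis by blast
qed

lemma annihilating_poly_column:
  assumes A: "A \<in> carrier_mat n n" and i: "i < n"
  shows "\<exists>q. q \<noteq> 0 \<and> (\<forall>a<n. poly_at_mat q A $$ (a,i) = 0)"
proof -
  define K where "K = mat n (Suc n) (\<lambda>(a,k). (A ^\<^sub>m k) $$ (a,i))"
  obtain c where c: "c \<in> carrier_vec (Suc n)" "c \<noteq> 0\<^sub>v (Suc n)" "K *\<^sub>v c = 0\<^sub>v n"
    using wide_mat_kernel_nontrivial[of K n] unfolding K_def by auto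
  define q where "q = Poly (list_of_vec c)"
  have cq: "coeff q k = (if k < Suc n then c $ k else 0)" for k
    unfolding q_def by (rule coeff_Poly_list_of_vec[OF c(1)])
  have "poly_at_mat q A $$ (a,i) = 0" if a: "a < n" for a
  proof -
    have "poly_at_mat q A $$ (a,i) = (\<Sum>k\<le>Suc n. coeff q k * (A ^\<^sub>m k) $$ (a,i))"
      unfolding q_def by (rule index_poly_at_mat[OF A degree_Poly_list_of_vec_le[OF c(1)] a i])
    also have "\<dots> = (\<Sum>k\<le>n. coeff q k * (A ^\<^sub>m k) $$ (a,i))"
      by (simp add: sum.atMost_Suc cq)
    also have "\<dots> = (\<Sum>k<Suc n. c $ k * (A ^\<^sub>m k) $$ (a,i))"
      by (subst lessThan_Suc_atMost, intro sum.cong) (auto simp: cq)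
    also have "\<dots> = (K *\<^sub>v c) $ a"
      using c(1) a unfolding K_def by (auto simp: scalar_prod_def lessThan_atLeast0 mult.commute)
    finally show ?thesis using c(3) a by simp
  qed
  moreover have "q \<noteq> 0" unfolding q_def by (rule Poly_list_of_vec_nonzero[OF c(1,2)])
  ultimately show ?thesis by blast
qed

lemma annihilating_poly_exists:
  assumes A: "A \<in> carrier_mat n n"
  shows "\<exists>q. q \<noteq> 0 \<and> poly_at_mat q A = 0\<^sub>m n n"
proof -
  have "\<forall>i\<in>{..<n}. \<exists>q. q \<noteq> 0 \<and> (\<forall>a<n. poly_at_mat q A $$ (a,i) = 0)"
    using annihilating_poly_column[OF A] by blast
  then obtain Qf where Qf: "\<And>i. i < n \<Longrightarrow> Qf i \<noteq> 0 \<and> (\<forall>a<n. poly_at_mat (Qf i) A $$ (a,i) = 0)"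
    by (metis lessThan_iff)
  define q where "q = (\<Prod>i<n. Qf i)"
  have "q \<noteq> 0" unfolding q_def using Qf by (auto simp: prod_zero_iff)
  moreover have "poly_at_mat q A = 0\<^sub>m n n"
  proof (rule eq_matI)
    fix a j assume "a < dim_row (0\<^sub>m n n :: complex mat)" "j < dim_col (0\<^sub>m n n :: complex mat)"
    then have a: "a < n" and j: "j < n" by auto
    define R where "R = (\<Prod>i\<in>{..<n}-{j}. Qf i)"
    have "q = R * Qf j" unfolding q_def R_def using j by (simp add: prod.remove mult.commute)
    then have "poly_at_mat q A = poly_at_mat R A * poly_at_mat (Qf j) A" using poly_at_mat_mult[OF A] by simp
    then have "poly_at_mat q A $$ (a,j) = (\<Sum>b<n. poly_at_mat R A $$ (a,b) * poly_at_mat (Qf j) A $$ (b,j))"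
      using index_mult_mat_sum[OF poly_at_mat_carrier[OF A] poly_at_mat_carrier[OF A] a j] by simp
    also have "\<dots> = 0" using Qf[OF j] by simp
    finally show "poly_at_mat q A $$ (a,j) = 0\<^sub>m n n $$ (a,j)" using a j by simp
  qed (use A in auto)
  ultimately show ?thesis by blast
qed

lemma monic_least_annihilator_unique:
  assumes A: "A \<in> carrier_mat n n"
    and p: "lead_coeff p = 1" "poly_at_mat p A = 0\<^sub>m n n"
      "\<forall>q. q \<noteq> 0 \<and> poly_at_mat q A = 0\<^sub>m n n \<longrightarrow> degree p \<le> degree q"
    and p': "lead_coeff p' = 1" "poly_at_mat p' A = 0\<^sub>m n n"
      "\<forall>q. q \<noteq> 0 \<and> poly_at_mat q A = 0\<^sub>m n n \<longrightarrow> degree p' \<le> degree q"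
  shows "p = p'"
proof (rule ccontr)
  assume ne: "p \<noteq> p'"
  have nz: "p \<noteq> 0" "p' \<noteq> 0" using p(1) p'(1) by auto
  have deq: "degree p = degree p'" using p p' nz by (simp add: le_antisym)
  define r where "r = p - p'"
  have rnz: "r \<noteq> 0" using ne unfolding r_def by simp
  have "poly_at_mat r A = 0\<^sub>m n n"
    unfolding r_def poly_at_mat_diff[OF A] using p(2) p'(2) by (intro eq_matI) auto
  then have "degree p \<le> degree r" using p(3) rnz by simp
  moreover have "degree r \<le> degree p" unfolding r_def using deq by (simp add: degree_diff_le)
  moreover have "coeff r (degree p) = 0" unfolding r_def using p(1) p'(1) deq by simp
  ultimately show False using rnz by (metis le_antisym leading_coeff_0_iff)
qed

lemma minimal_polyD:
  assumes A: "A \<in> carrier_mat n n"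
  shows "lead_coeff (minimal_poly A) = 1" "poly_at_mat (minimal_poly A) A = 0\<^sub>m n n"
    "\<And>q. q \<noteq> 0 \<Longrightarrow> poly_at_mat q A = 0\<^sub>m n n \<Longrightarrow> degree (minimal_poly A) \<le> degree q"
proof -
  let ?P = "\<lambda>p. lead_coeff p = 1 \<and> poly_at_mat p A = 0\<^sub>m n n \<and>
     (\<forall>q. q \<noteq> 0 \<and> poly_at_mat q A = 0\<^sub>m n n \<longrightarrow> degree p \<le> degree q)"
  obtain q0 where q0: "q0 \<noteq> 0" "poly_at_mat q0 A = 0\<^sub>m n n" using annihilating_poly_exists[OF A] by blast
  obtain p0 where p0: "p0 \<noteq> 0 \<and> poly_at_mat p0 A = 0\<^sub>m n n"
    and p0_least: "\<And>q. q \<noteq> 0 \<and> poly_at_mat q A = 0\<^sub>m n n \<Longrightarrow> degree p0 \<le> degree q"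
    using ex_has_least_nat[of "\<lambda>q. q \<noteq> 0 \<and> poly_at_mat q A = 0\<^sub>m n n" q0 degree] q0 by blast
  define m0 where "m0 = Polynomial.smult (1 / lead_coeff p0) p0"
  have l0: "lead_coeff p0 \<noteq> 0" using p0 by simp
  have Pm0: "?P m0"
  proof (intro conjI allI impI)
    show "lead_coeff m0 = 1" unfolding m0_def using l0 by (simp add: lead_coeff_smult)
    show "poly_at_mat m0 A = 0\<^sub>m n n"
      unfolding m0_def poly_at_mat_smult[OF A] using p0 by (intro eq_matI) auto
    fix q assume "q \<noteq> 0 \<and> poly_at_mat q A = 0\<^sub>m n n"
    then show "degree m0 \<le> degree q" unfolding m0_def using p0_least l0 by simp
  qed
  have "p = m0" if "?P p" for p
    using that Pm0 by (intro monic_least_annihilator_unique[OF A]) simp_all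
  with Pm0 have "\<exists>!p. ?P p" by (intro ex1I)
  from theI'[OF this] have "?P (minimal_poly A)"
    unfolding minimal_poly_def using A by simp
  then show "lead_coeff (minimal_poly A) = 1" "poly_at_mat (minimal_poly A) A = 0\<^sub>m n n"
    "\<And>q. q \<noteq> 0 \<Longrightarrow> poly_at_mat q A = 0\<^sub>m n n \<Longrightarrow> degree (minimal_poly A) \<le> degree q"
    by auto
qed

lemma non_derogatory_char_poly_annihilates:
  "A \<in> carrier_mat n n \<Longrightarrow> non_derogatory A \<Longrightarrow> poly_at_mat (char_poly A) A = 0\<^sub>m n n"
  using minimal_polyD unfolding non_derogatory_def by metis

lemma non_derogatory_annihilator_degree:
  assumes "A \<in> carrier_mat n n" "non_derogatory A" "q \<noteq> 0" "poly_at_mat q A = 0\<^sub>m n n"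
  shows "n \<le> degree q"
  using minimal_polyD(3)[OF assms(1,3,4)] assms(2) degree_monic_char_poly[OF assms(1)]
  unfolding non_derogatory_def by simp

section \<open>Cyclic vectors of non-derogatory matrices\<close>

lemma finite_monic_divisors:
  assumes m: "(m :: complex poly) \<noteq> 0"
  shows "finite {d. d dvd m \<and> lead_coeff d = 1}"
proof -
  define R where "R = {z. poly m z = 0}"
  have Rf: "finite R" unfolding R_def using poly_roots_finite[OF m] .
  define G where "G = (\<lambda>f. \<Prod>z\<in>R. [:-z,1:] ^ f z)"
  define F where "F = {f. \<forall>z. (z \<in> R \<longrightarrow> f z \<in> {0..degree m}) \<and> (z \<notin> R \<longrightarrow> f z = (0::nat))}"
  have Ff: "finite F" unfolding F_def by (rule finite_set_of_finite_funs[OF Rf]) simp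
  have "{d. d dvd m \<and> lead_coeff d = 1} \<subseteq> G ` F"
  proof
    fix d assume "d \<in> {d. d dvd m \<and> lead_coeff d = 1}"
    then have dm: "d dvd m" and l: "lead_coeff d = 1" by auto
    have d0: "d \<noteq> 0" using l by auto
    have roots: "{z. poly d z = 0} \<subseteq> R"
      unfolding R_def using dm by (auto elim!: dvdE)
    define f where "f = (\<lambda>z. if z \<in> R then order z d else 0)"
    have "f \<in> F" unfolding F_def f_def
      using order_degree[OF d0] dvd_imp_degree_le[OF dm m] by (auto intro: le_trans)
    moreover have "d = G f"
    proof -
      have "d = (\<Prod>z|poly d z = 0. [:-z, 1:] ^ order z d)"
        using complex_poly_decompose[of d] l by simp
      also have "\<dots> = (\<Prod>z\<in>R. [:-z, 1:] ^ order z d)"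
        by (rule prod.mono_neutral_left[OF Rf roots]) (auto simp: order_0I)
      also have "\<dots> = G f" unfolding G_def f_def by (intro prod.cong) auto
      finally show ?thesis .
    qed
    ultimately show "d \<in> G ` F" by blast
  qed
  then show ?thesis using finite_imageI[OF Ff] finite_subset by blast
qed

lemma poly_altdef_le:
  fixes p :: "'a :: comm_semiring_1 poly"
  assumes "degree p \<le> N"
  shows "poly p x = (\<Sum>k\<le>N. coeff p k * x ^ k)"
proof -
  have "poly p x = (\<Sum>k\<le>degree p. coeff p k * x ^ k)" by (rule poly_altdef)
  also have "\<dots> = (\<Sum>k\<le>N. coeff p k * x ^ k)"
    by (rule sum.mono_neutral_left) (use assms in \<open>auto simp: coeff_eq_0\<close>)
  finally show ?thesis .
qed

lemma poly_Poly_list_of_vec: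
  fixes c :: "'a :: comm_semiring_1 vec"
  assumes c: "c \<in> carrier_vec n"
  shows "poly (Poly (list_of_vec c)) z = (\<Sum>k<n. c $ k * z ^ k)"
proof -
  define p where "p = Poly (list_of_vec c)"
  have cp: "coeff p k = (if k < n then c $ k else 0)" for k
    unfolding p_def by (rule coeff_Poly_list_of_vec[OF c])
  have "poly p z = (\<Sum>k\<le>n. coeff p k * z ^ k)"
    unfolding p_def by (rule poly_altdef_le[OF degree_Poly_list_of_vec_le[OF c]])
  also have "\<dots> = (\<Sum>k<n. c $ k * z ^ k)"
    by (simp add: lessThan_Suc_atMost[symmetric] cp)
  finally show ?thesis unfolding p_def .
qed

definition powers_vec :: "nat \<Rightarrow> complex \<Rightarrow> complex vec" where
  "powers_vec n z = vec n (\<lambda>k. z ^ k)"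

lemma powers_vec_carrier [simp]: "powers_vec n z \<in> carrier_vec n"
  unfolding powers_vec_def by simp

lemma finite_powers_vec_kernel:
  assumes M: "M \<in> carrier_mat m n" and M0: "M \<noteq> 0\<^sub>m m n"
  shows "finite {z. M *\<^sub>v powers_vec n z = 0\<^sub>v m}"
proof -
  obtain i j where i: "i < m" and j: "j < n" and nz: "M $$ (i,j) \<noteq> 0"
    using M0 M by (metis (no_types, lifting) carrier_matD eq_matI index_zero_mat(1-3))
  define p where "p = Poly (list_of_vec (row M i))"
  have row: "row M i \<in> carrier_vec n" using M row_carrier carrier_matD(2) by metis
  have "coeff p j = M $$ (i,j)"
    unfolding p_def coeff_Poly_list_of_vec[OF row] using i j M by simp
  then have "p \<noteq> 0" using nz by auto
  moreover have "{z. M *\<^sub>v powers_vec n z = 0\<^sub>v m} \<subseteq> {z. poly p z = 0}"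
  proof
    fix z assume "z \<in> {z. M *\<^sub>v powers_vec n z = 0\<^sub>v m}"
    then have "(M *\<^sub>v powers_vec n z) $ i = 0" using i by simp
    moreover have "(M *\<^sub>v powers_vec n z) $ i = poly p z"
      unfolding p_def poly_Poly_list_of_vec[OF row]
      using M i by (auto simp: powers_vec_def scalar_prod_def lessThan_atLeast0)
    ultimately show "z \<in> {z. poly p z = 0}" by simp
  qed
  ultimately show ?thesis using poly_roots_finite finite_subset by blast
qed

lemma poly_at_mat_gcd_mult_vec:
  assumes A: "A \<in> carrier_mat n n" and v: "v \<in> carrier_vec n"
    and m: "poly_at_mat m A = 0\<^sub>m n n" and q: "poly_at_mat q A *\<^sub>v v = 0\<^sub>v n"
  shows "poly_at_mat (gcd q m) A *\<^sub>v v = 0\<^sub>v n"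
proof -
  obtain a b where ab: "a * q + b * m = gcd q m"
    using bezout_coefficients_fst_snd[of q m] by blast
  have "poly_at_mat (gcd q m) A = poly_at_mat a A * poly_at_mat q A + poly_at_mat b A * poly_at_mat m A"
    using ab poly_at_mat_add[OF A] poly_at_mat_mult[OF A] by metis
  also have "\<dots> = poly_at_mat a A * poly_at_mat q A"
    using m A by (simp add: right_mult_zero_mat[of _ n n] square_mult_carrier_mat)
  finally have "poly_at_mat (gcd q m) A *\<^sub>v v = poly_at_mat a A *\<^sub>v (poly_at_mat q A *\<^sub>v v)"
    using A v assoc_mult_mat_vec[of "poly_at_mat a A" n n "poly_at_mat q A" n v] by simp
  also have "\<dots> = 0\<^sub>v n" unfolding q using A by (intro eq_vecI) auto
  finally show ?thesis .
qed

text \<open>For a generic \<open>z\<close>, the vector \<open>(1, z, \<dots>, z\<^sup>n\<^sup>-\<^sup>1)\<close> is cyclic: only finitely many \<open>z\<close> are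
  killed by \<open>d(A)\<close> for one of the finitely many monic divisors \<open>d\<close> of \<open>\<chi>\<^sub>A\<close> of degree \<open>< n\<close>
  (each has \<open>d(A) \<noteq> 0\<close> because \<open>A\<close> is non-derogatory), and \<open>q(A) v = 0\<close> forces
  \<open>gcd q \<chi>\<^sub>A (A) v = 0\<close>.\<close>

lemma non_derogatory_cyclic_vector:
  assumes A: "A \<in> carrier_mat n n" and nd: "non_derogatory A"
  shows "\<exists>v \<in> carrier_vec n. \<forall>q. q \<noteq> 0 \<longrightarrow> degree q < n \<longrightarrow> poly_at_mat q A *\<^sub>v v \<noteq> 0\<^sub>v n"
proof -
  define m where "m = char_poly A"
  have m0: "m \<noteq> 0" unfolding m_def using degree_monic_char_poly[OF A] by auto
  have mA: "poly_at_mat m A = 0\<^sub>m n n"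
    unfolding m_def by (rule non_derogatory_char_poly_annihilates[OF A nd])
  define D where "D = {d. d dvd m \<and> lead_coeff d = 1 \<and> degree d < n}"
  have "finite D" unfolding D_def
    by (rule finite_subset[OF _ finite_monic_divisors[OF m0]]) auto
  moreover have "finite {z. poly_at_mat d A *\<^sub>v powers_vec n z = 0\<^sub>v n}" if "d \<in> D" for d
  proof (rule finite_powers_vec_kernel)
    have "d \<noteq> 0" "degree d < n" using that unfolding D_def by auto
    then show "poly_at_mat d A \<noteq> 0\<^sub>m n n"
      using non_derogatory_annihilator_degree[OF A nd, of d] by auto
  qed (use A in simp)
  ultimately have fin: "finite (\<Union>d\<in>D. {z. poly_at_mat d A *\<^sub>v powers_vec n z = 0\<^sub>v n})"
    by (rule finite_UN_I)
  obtain z where z: "z \<notin> (\<Union>d\<in>D. {z. poly_at_mat d A *\<^sub>v powers_vec n z = 0\<^sub>v n})"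
    using ex_new_if_finite[OF infinite_UNIV_char_0 fin] by blast
  have "poly_at_mat q A *\<^sub>v powers_vec n z \<noteq> 0\<^sub>v n" if q0: "q \<noteq> 0" and dq: "degree q < n" for q
  proof
    assume "poly_at_mat q A *\<^sub>v powers_vec n z = 0\<^sub>v n"
    then have "poly_at_mat (gcd q m) A *\<^sub>v powers_vec n z = 0\<^sub>v n"
      by (rule poly_at_mat_gcd_mult_vec[OF A powers_vec_carrier mA])
    moreover have "gcd q m \<in> D"
    proof -
      have "lead_coeff (gcd q m) = 1"
        using unit_factor_gcd[of q m] q0 by (simp add: unit_factor_poly_def, metis one_pCons pCons_eq_iff)
      moreover have "degree (gcd q m) < n" using dvd_imp_degree_le[of "gcd q m" q] q0 dq by simp
      ultimately show ?thesis unfolding D_def by simp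
    qed
    ultimately show False using z by blast
  qed
  then show ?thesis using powers_vec_carrier by blast
qed

definition krylov_mat :: "'a :: semiring_1 mat \<Rightarrow> 'a vec \<Rightarrow> 'a mat" where
  "krylov_mat A v = mat (dim_vec v) (dim_vec v) (\<lambda>(i,k). (A ^\<^sub>m k *\<^sub>v v) $ i)"

lemma krylov_mat_carrier [simp]: "v \<in> carrier_vec n \<Longrightarrow> krylov_mat A v \<in> carrier_mat n n"
  unfolding krylov_mat_def by simp

lemma krylov_mat_det_nonzero:
  assumes A: "A \<in> carrier_mat n n" and v: "v \<in> carrier_vec n"
    and cyc: "\<And>q. q \<noteq> 0 \<Longrightarrow> degree q < n \<Longrightarrow> poly_at_mat q A *\<^sub>v v \<noteq> 0\<^sub>v n"
  shows "det (krylov_mat A v) \<noteq> 0"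
proof
  assume "det (krylov_mat A v) = 0"
  then obtain c where c: "c \<in> carrier_vec n" "c \<noteq> 0\<^sub>v n" "krylov_mat A v *\<^sub>v c = 0\<^sub>v n"
    using det_0_iff_vec_prod_zero[OF krylov_mat_carrier[OF v]] by blast
  define q where "q = Poly (list_of_vec c)"
  have cq: "coeff q k = (if k < n then c $ k else 0)" for k
    unfolding q_def by (rule coeff_Poly_list_of_vec[OF c(1)])
  have q0: "q \<noteq> 0" unfolding q_def by (rule Poly_list_of_vec_nonzero[OF c(1,2)])
  have dq: "degree q \<le> n" unfolding q_def by (rule degree_Poly_list_of_vec_le[OF c(1)])
  have "degree q < n"
  proof (rule ccontr)
    assume "\<not> degree q < n"
    then have "lead_coeff q = 0" using dq cq by simp
    then show False using q0 by simp
  qed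
  moreover have "poly_at_mat q A *\<^sub>v v = 0\<^sub>v n"
  proof (rule eq_vecI)
    fix i assume "i < dim_vec (0\<^sub>v n :: complex vec)"
    then have i: "i < n" by simp
    have "(poly_at_mat q A *\<^sub>v v) $ i = (\<Sum>k\<le>n. coeff q k * (A ^\<^sub>m k *\<^sub>v v) $ i)"
      by (rule poly_at_mat_mult_vec[OF A v dq i])
    also have "\<dots> = (\<Sum>k<n. c $ k * (A ^\<^sub>m k *\<^sub>v v) $ i)"
      by (simp add: lessThan_Suc_atMost[symmetric] cq)
    also have "\<dots> = (krylov_mat A v *\<^sub>v c) $ i"
      using i c(1) v unfolding krylov_mat_def by (auto simp: scalar_prod_def lessThan_atLeast0 mult.commute)
    finally show "(poly_at_mat q A *\<^sub>v v) $ i = 0\<^sub>v n $ i" using c(3) i by simp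
  qed (use A in simp)
  ultimately show False using cyc[OF q0] by simp
qed

lemma non_derogatory_krylov_det_nonzero:
  assumes "A \<in> carrier_mat n n" "non_derogatory A"
  shows "\<exists>v \<in> carrier_vec n. det (krylov_mat A v) \<noteq> 0"
  using non_derogatory_cyclic_vector[OF assms] krylov_mat_det_nonzero[OF assms(1)] by blast

section \<open>The commutator equation\<close>

text \<open>The first \<open>n - 1\<close> columns of \<open>C\<close> are \<open>e\<^sub>1, \<dots>, e\<^sub>n\<^sub>-\<^sub>1\<close>, so \<open>C\<close> is the companion
  matrix of \<open>\<Sum>m\<le>n. char_coeff m * x ^ m\<close>.  The equation \<open>X C - C X = B\<close> determines the columns
  of \<open>X\<close> recursively; the last column is consistent iff \<open>defect B = 0\<close>, and inverting the Hankel
  matrix of \<open>fund_seq\<close> shows that this follows from \<open>tr (C\<^sup>s B) = 0\<close> for \<open>s < n\<close>.\<close>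

locale companion_shaped =
  fixes n :: nat and C :: "complex mat"
  assumes n_pos: "0 < n" and C_carrier: "C \<in> carrier_mat n n"
    and C_subdiag: "\<And>i k. i < n \<Longrightarrow> Suc k < n \<Longrightarrow> C $$ (i,k) = (if i = Suc k then 1 else 0)"
begin

definition char_coeff :: "nat \<Rightarrow> complex" where
  "char_coeff m = (if m = n then 1 else - C $$ (m, n-1))"

definition fund_seq :: "nat \<Rightarrow> complex" where
  "fund_seq j = (C ^\<^sub>m j) $$ (n-1, 0)"

lemma pow_col0:
  "j < n \<Longrightarrow> i < n \<Longrightarrow> (C ^\<^sub>m j) $$ (i,0) = (if i = j then 1 else 0)"
proof (induction j arbitrary: i)
  case 0 then show ?case using C_carrier by simp
next
  case (Suc j)
  have "(C ^\<^sub>m Suc j) $$ (i,0) = (C * C ^\<^sub>m j) $$ (i,0)" using pow_mat_Suc_left[OF C_carrier] by simp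
  also have "\<dots> = (\<Sum>b<n. C $$ (i,b) * (C ^\<^sub>m j) $$ (b,0))"
    using Suc.prems C_carrier by (intro index_mult_mat_sum) auto
  also have "\<dots> = (\<Sum>b<n. if b = j then C $$ (i,b) else 0)"
    using Suc by (intro sum.cong) auto
  also have "\<dots> = C $$ (i,j)" using Suc.prems by simp
  also have "\<dots> = (if i = Suc j then 1 else 0)" using C_subdiag Suc.prems by simp
  finally show ?case .
qed

lemma pow_entry_shift: "l < n \<Longrightarrow> i < n \<Longrightarrow> (C ^\<^sub>m t) $$ (i,l) = (C ^\<^sub>m (t+l)) $$ (i,0)"
proof -
  assume l: "l < n" and i: "i < n"
  have "(C ^\<^sub>m (t+l)) $$ (i,0) = (\<Sum>b<n. (C ^\<^sub>m t) $$ (i,b) * (C ^\<^sub>m l) $$ (b,0))"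
    using pow_mat_add[OF C_carrier, of t l] index_mult_mat_sum[of "C ^\<^sub>m t" n n "C ^\<^sub>m l" n i 0] C_carrier i n_pos by simp
  also have "\<dots> = (\<Sum>b<n. if b = l then (C ^\<^sub>m t) $$ (i,b) else 0)"
    using pow_col0 l by (intro sum.cong) auto
  also have "\<dots> = (C ^\<^sub>m t) $$ (i,l)" using l by simp
  finally show ?thesis by simp
qed

lemma cayley_hamilton_col0: "i < n \<Longrightarrow> (\<Sum>m\<le>n. char_coeff m * (C ^\<^sub>m m) $$ (i,0)) = 0"
proof -
  assume i: "i < n"
  have Wn: "(C ^\<^sub>m n) $$ (i,0) = C $$ (i, n-1)"
  proof -
    have "C ^\<^sub>m n = C * C ^\<^sub>m (n-1)" using pow_mat_Suc_left[OF C_carrier, of "n-1"] n_pos by simp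
    then have "(C ^\<^sub>m n) $$ (i,0) = (\<Sum>b<n. C $$ (i,b) * (C ^\<^sub>m (n-1)) $$ (b,0))"
      using index_mult_mat_sum[of C n n "C ^\<^sub>m (n-1)" n i 0] C_carrier i n_pos by simp
    also have "\<dots> = (\<Sum>b<n. if b = n-1 then C $$ (i,b) else 0)"
      using pow_col0 n_pos by (intro sum.cong) auto
    also have "\<dots> = C $$ (i, n-1)" using n_pos by simp
    finally show ?thesis .
  qed
  have "(\<Sum>m\<le>n. char_coeff m * (C ^\<^sub>m m) $$ (i,0)) = (\<Sum>m<n. char_coeff m * (C ^\<^sub>m m) $$ (i,0)) + char_coeff n * (C ^\<^sub>m n) $$ (i,0)"
    by (simp add: lessThan_Suc_atMost[symmetric])
  also have "(\<Sum>m<n. char_coeff m * (C ^\<^sub>m m) $$ (i,0)) = (\<Sum>m<n. if m = i then char_coeff m else 0)"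
    using pow_col0 i by (intro sum.cong) auto
  also have "\<dots> = char_coeff i" using i by simp
  finally show ?thesis using Wn i by (simp add: char_coeff_def)
qed

lemma cayley_hamilton_col0_shift: "i < n \<Longrightarrow> (\<Sum>m\<le>n. char_coeff m * (C ^\<^sub>m (t+m)) $$ (i,0)) = 0"
proof -
  assume i: "i < n"
  have "(\<Sum>m\<le>n. char_coeff m * (C ^\<^sub>m (t+m)) $$ (i,0)) =
        (\<Sum>m\<le>n. char_coeff m * (\<Sum>b<n. (C ^\<^sub>m t) $$ (i,b) * (C ^\<^sub>m m) $$ (b,0)))"
    using pow_mat_add[OF C_carrier] index_mult_mat_sum[of "C ^\<^sub>m t" n n _ n] C_carrier i n_pos by (intro sum.cong) auto
  also have "\<dots> = (\<Sum>b<n. (C ^\<^sub>m t) $$ (i,b) * (\<Sum>m\<le>n. char_coeff m * (C ^\<^sub>m m) $$ (b,0)))"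
    by (simp add: sum_distrib_left sum_distrib_right mult_ac sum.swap[of _ "{..n}"])
  also have "\<dots> = 0" using cayley_hamilton_col0 by simp
  finally show ?thesis .
qed

lemma fund_seq_initial: "j < n \<Longrightarrow> fund_seq j = (if j = n-1 then 1 else 0)"
  unfolding fund_seq_def using pow_col0[of j "n-1"] n_pos by auto

lemma fund_seq_recurrence: "(\<Sum>m\<le>n. char_coeff m * fund_seq (t+m)) = 0"
  unfolding fund_seq_def using cayley_hamilton_col0_shift[of "n-1" t] n_pos by simp

lemma hankel_inverse:
  assumes l: "l < n" and k: "k < n"
  shows "(\<Sum>m\<in>{Suc k..n}. char_coeff m * fund_seq (l+m-1-k)) = (if l = k then 1 else 0)"
proof (cases "l \<le> k")
  case True
  have "(\<Sum>m\<in>{Suc k..n}. char_coeff m * fund_seq (l+m-1-k)) = (\<Sum>m\<in>{Suc k..n}. if m = n \<and> l = k then 1 else 0)"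
  proof (intro sum.cong refl)
    fix m assume m: "m \<in> {Suc k..n}"
    have lt: "l+m-1-k < n" using m True l by auto
    show "char_coeff m * fund_seq (l+m-1-k) = (if m = n \<and> l = k then 1 else 0)"
      using fund_seq_initial[OF lt] m True by (auto simp: char_coeff_def)
  qed
  also have "\<dots> = (if l = k then 1 else 0)"
    using k by (cases "l = k") (auto simp: sum.delta)
  finally show ?thesis .
next
  case False
  define t where "t = l - 1 - k"
  have split: "{..n} = {..k} \<union> {Suc k..n}" using k by auto
  have "0 = (\<Sum>m\<le>n. char_coeff m * fund_seq (t+m))" using fund_seq_recurrence by simp
  also have "\<dots> = (\<Sum>m\<le>k. char_coeff m * fund_seq (t+m)) + (\<Sum>m\<in>{Suc k..n}. char_coeff m * fund_seq (t+m))"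
    by (subst split, rule sum.union_disjoint) auto
  also have "(\<Sum>m\<le>k. char_coeff m * fund_seq (t+m)) = 0"
  proof (intro sum.neutral ballI)
    fix m assume "m \<in> {..k}"
    then have "t + m < n" "t + m \<noteq> n - 1" using False l unfolding t_def by auto
    then show "char_coeff m * fund_seq (t+m) = 0" using fund_seq_initial by simp
  qed
  also have "(\<Sum>m\<in>{Suc k..n}. char_coeff m * fund_seq (t+m)) = (\<Sum>m\<in>{Suc k..n}. char_coeff m * fund_seq (l+m-1-k))"
    using False unfolding t_def by (intro sum.cong) auto
  finally show ?thesis using False by simp
qed

lemma hankel_inversion:
  assumes k: "k < n"
  shows "f k = (\<Sum>m\<in>{Suc k..n}. char_coeff m * (\<Sum>l<n. fund_seq (m-1-k+l) * f l))"
proof -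
  have "(\<Sum>m\<in>{Suc k..n}. char_coeff m * (\<Sum>l<n. fund_seq (m-1-k+l) * f l))
      = (\<Sum>l<n. f l * (\<Sum>m\<in>{Suc k..n}. char_coeff m * fund_seq (l+m-1-k)))"
    by (simp add: sum_distrib_left sum_distrib_right mult_ac sum.swap[of _ "{Suc k..n}"])
      (intro sum.cong refl, auto simp: add.commute)
  also have "\<dots> = (\<Sum>l<n. if l = k then f l else 0)"
    using hankel_inverse k by (intro sum.cong) auto
  also have "\<dots> = f k" using k by simp
  finally show ?thesis by simp
qed

text \<open>\<open>sol B k a\<close> is the \<open>(a, k)\<close> entry of the solution: column \<open>k + 1\<close> of the equation reads
  \<open>X e\<^sub>k\<^sub>+\<^sub>1 = B e\<^sub>k + C X e\<^sub>k\<close>, started with \<open>X e\<^sub>0 = 0\<close>.\<close>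

definition sol :: "complex mat \<Rightarrow> nat \<Rightarrow> nat \<Rightarrow> complex" where
  "sol B k a = (\<Sum>i<k. (C ^\<^sub>m (k-1-i) * B) $$ (a,i))"

definition defect :: "complex mat \<Rightarrow> nat \<Rightarrow> complex" where
  "defect B a = (\<Sum>m\<le>n. char_coeff m * sol B m a)"

lemma fund_seq_pow_entry: "l < n \<Longrightarrow> fund_seq (j+l) = (C ^\<^sub>m j) $$ (n-1, l)"
  unfolding fund_seq_def using pow_entry_shift[of l "n-1" j] n_pos by simp

lemma fund_seq_mult:
  assumes M: "M \<in> carrier_mat n n" and k: "k < n"
  shows "(\<Sum>l<n. fund_seq (j+l) * M $$ (l,k)) = (C ^\<^sub>m j * M) $$ (n-1,k)"
  using index_mult_mat_sum[of "C ^\<^sub>m j" n n M n "n-1" k] M k n_pos C_carrier fund_seq_pow_entry by simp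

lemma pow_mult_diag:
  assumes B: "B \<in> carrier_mat n n" and k: "k < n"
  shows "(C ^\<^sub>m s * B) $$ (k,k) =
    (\<Sum>m\<in>{Suc k..n}. char_coeff m * (\<Sum>b<n. fund_seq (s+b) * (C ^\<^sub>m (m-1-k) * B) $$ (b,k)))"
proof -
  have "(C ^\<^sub>m s * B) $$ (k,k) =
    (\<Sum>m\<in>{Suc k..n}. char_coeff m * (\<Sum>l<n. fund_seq (m-1-k+l) * (C ^\<^sub>m s * B) $$ (l,k)))"
    by (rule hankel_inversion[OF k])
  also have "\<dots> = (\<Sum>m\<in>{Suc k..n}. char_coeff m * (\<Sum>b<n. fund_seq (s+b) * (C ^\<^sub>m (m-1-k) * B) $$ (b,k)))"
  proof (rule sum.cong[OF refl])
    fix m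
    have "C ^\<^sub>m (m-1-k) * (C ^\<^sub>m s * B) = (C ^\<^sub>m (m-1-k) * C ^\<^sub>m s) * B"
      using B C_carrier by (simp add: assoc_mult_mat[of _ n n _ n B n])
    also have "\<dots> = C ^\<^sub>m s * (C ^\<^sub>m (m-1-k) * B)"
      using B C_carrier pow_mat_commute[OF C_carrier, of "m-1-k" s]
      by (simp add: assoc_mult_mat[of _ n n _ n B n])
    finally have comm: "C ^\<^sub>m (m-1-k) * (C ^\<^sub>m s * B) = C ^\<^sub>m s * (C ^\<^sub>m (m-1-k) * B)" .
    have "(\<Sum>l<n. fund_seq (m-1-k+l) * (C ^\<^sub>m s * B) $$ (l,k)) = (C ^\<^sub>m (m-1-k) * (C ^\<^sub>m s * B)) $$ (n-1,k)"
      by (rule fund_seq_mult) (use B C_carrier k in auto)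
    also have "\<dots> = (\<Sum>b<n. fund_seq (s+b) * (C ^\<^sub>m (m-1-k) * B) $$ (b,k))"
      unfolding comm by (rule fund_seq_mult[symmetric]) (use B C_carrier k in auto)
    finally show "char_coeff m * (\<Sum>l<n. fund_seq (m-1-k+l) * (C ^\<^sub>m s * B) $$ (l,k)) =
        char_coeff m * (\<Sum>b<n. fund_seq (s+b) * (C ^\<^sub>m (m-1-k) * B) $$ (b,k))" by simp
  qed
  finally show ?thesis .
qed

lemma trace_pow_mult:
  assumes B: "B \<in> carrier_mat n n"
  shows "mat_trace (C ^\<^sub>m s * B) = (\<Sum>b<n. fund_seq (s+b) * defect B b)"
proof -
  have "mat_trace (C ^\<^sub>m s * B) = (\<Sum>k<n. \<Sum>m\<in>{Suc k..n}. char_coeff m * (\<Sum>b<n. fund_seq (s+b) * (C ^\<^sub>m (m-1-k) * B) $$ (b,k)))"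
    unfolding mat_trace_carrier[OF mult_carrier_mat[OF pow_carrier_mat[OF C_carrier] B]] using pow_mult_diag[OF B] by (intro sum.cong) auto
  also have "\<dots> = (\<Sum>m\<le>n. \<Sum>k<m. char_coeff m * (\<Sum>b<n. fund_seq (s+b) * (C ^\<^sub>m (m-1-k) * B) $$ (b,k)))"
    by (rule sum_triangle_swap)
  also have "\<dots> = (\<Sum>m\<le>n. \<Sum>k<m. \<Sum>b<n. char_coeff m * (fund_seq (s+b) * (C ^\<^sub>m (m-1-k) * B) $$ (b,k)))"
    by (simp add: sum_distrib_left)
  also have "\<dots> = (\<Sum>m\<le>n. \<Sum>b<n. \<Sum>k<m. char_coeff m * (fund_seq (s+b) * (C ^\<^sub>m (m-1-k) * B) $$ (b,k)))"
    by (rule sum.cong[OF refl], rule sum.swap)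
  also have "\<dots> = (\<Sum>b<n. \<Sum>m\<le>n. \<Sum>k<m. char_coeff m * (fund_seq (s+b) * (C ^\<^sub>m (m-1-k) * B) $$ (b,k)))"
    by (rule sum.swap)
  also have "\<dots> = (\<Sum>b<n. fund_seq (s+b) * defect B b)"
    unfolding defect_def sol_def
    by (rule sum.cong[OF refl]) (simp add: sum_distrib_left mult_ac)
  finally show ?thesis .
qed

lemma defect_zero:
  assumes B: "B \<in> carrier_mat n n" and tr0: "\<And>s. s < n \<Longrightarrow> mat_trace (C ^\<^sub>m s * B) = 0"
    and a: "a < n"
  shows "defect B a = 0"
proof -
  have "defect B a = (\<Sum>m\<in>{Suc a..n}. char_coeff m * (\<Sum>l<n. fund_seq (m-1-a+l) * defect B l))"
    by (rule hankel_inversion[OF a])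
  also have "\<dots> = 0"
  proof (intro sum.neutral ballI)
    fix m assume m: "m \<in> {Suc a..n}"
    have "(\<Sum>l<n. fund_seq (m-1-a+l) * defect B l) = mat_trace (C ^\<^sub>m (m-1-a) * B)"
      using trace_pow_mult[OF B, of "m-1-a"] by simp
    also have "\<dots> = 0" using tr0 m by auto
    finally show "char_coeff m * (\<Sum>l<n. fund_seq (m-1-a+l) * defect B l) = 0" by simp
  qed
  finally show ?thesis .
qed

lemma sol_Suc:
  assumes B: "B \<in> carrier_mat n n" and a: "a < n" and k: "k < n"
  shows "sol B (Suc k) a = B $$ (a,k) + (\<Sum>b<n. C $$ (a,b) * sol B k b)"
proof -
  have "sol B (Suc k) a = (\<Sum>i<k. (C ^\<^sub>m (k-i) * B) $$ (a,i)) + (C ^\<^sub>m 0 * B) $$ (a,k)"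
    unfolding sol_def by simp
  also have "(C ^\<^sub>m 0 * B) $$ (a,k) = B $$ (a,k)" using B C_carrier by simp
  also have "(\<Sum>i<k. (C ^\<^sub>m (k-i) * B) $$ (a,i)) = (\<Sum>i<k. \<Sum>b<n. C $$ (a,b) * (C ^\<^sub>m (k-1-i) * B) $$ (b,i))"
  proof (rule sum.cong[OF refl])
    fix i assume i: "i \<in> {..<k}"
    have "C ^\<^sub>m (k-i) * B = (C * C ^\<^sub>m (k-1-i)) * B"
    proof -
      have "k - i = Suc (k-1-i)" using i by auto
      then show ?thesis using pow_mat_Suc_left[OF C_carrier, of "k-1-i"] by simp
    qed
    also have "\<dots> = C * (C ^\<^sub>m (k-1-i) * B)" using B C_carrier by (simp add: assoc_mult_mat[of _ n n _ n B n])
    moreover have "C ^\<^sub>m (k-1-i) * B \<in> carrier_mat n n" using B C_carrier by (meson mult_carrier_mat pow_carrier_mat)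
    ultimately show "(C ^\<^sub>m (k-i) * B) $$ (a,i) = (\<Sum>b<n. C $$ (a,b) * (C ^\<^sub>m (k-1-i) * B) $$ (b,i))"
      using index_mult_mat_sum[of C n n "C ^\<^sub>m (k-1-i) * B" n a i] C_carrier a i k by simp
  qed
  also have "\<dots> = (\<Sum>b<n. C $$ (a,b) * sol B k b)"
    unfolding sol_def by (simp add: sum_distrib_left sum.swap[of _ "{..<k}"])
  finally show ?thesis by simp
qed

definition sol_mat :: "complex mat \<Rightarrow> complex mat" where
  "sol_mat B = mat n n (\<lambda>(a,k). sol B k a)"

lemma sol_mat_carrier [simp]: "sol_mat B \<in> carrier_mat n n"
  and dim_sol_mat [simp]: "dim_row (sol_mat B) = n" "dim_col (sol_mat B) = n"
  unfolding sol_mat_def by simp_all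

lemma sol_mat_mult_C:
  assumes a: "a < n" and k: "k < n"
  shows "(sol_mat B * C) $$ (a,k) =
    (if Suc k < n then sol B (Suc k) a else - (\<Sum>b<n. char_coeff b * sol B b a))"
proof -
  have XC: "(sol_mat B * C) $$ (a,k) = (\<Sum>b<n. sol B b a * C $$ (b,k))"
    using index_mult_mat_sum[OF sol_mat_carrier C_carrier a k] a unfolding sol_mat_def by simp
  show ?thesis
  proof (cases "Suc k < n")
    case True
    then have "(\<Sum>b<n. sol B b a * C $$ (b,k)) = (\<Sum>b<n. if b = Suc k then sol B b a else 0)"
      using C_subdiag by (intro sum.cong) auto
    with True XC show ?thesis by simp
  next
    case False
    then have "k = n - 1" using k by simp
    then have "(\<Sum>b<n. sol B b a * C $$ (b,k)) = (\<Sum>b<n. - (char_coeff b * sol B b a))"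
      by (intro sum.cong) (auto simp: char_coeff_def)
    with False XC show ?thesis by (simp add: sum_negf)
  qed
qed

lemma C_mult_sol_mat:
  assumes a: "a < n" and k: "k < n"
  shows "(C * sol_mat B) $$ (a,k) = (\<Sum>b<n. C $$ (a,b) * sol B k b)"
  using index_mult_mat_sum[OF C_carrier sol_mat_carrier a k] k unfolding sol_mat_def by simp

lemma commutator_eq_solvable:
  assumes B: "B \<in> carrier_mat n n" and tr0: "\<And>s. s < n \<Longrightarrow> mat_trace (C ^\<^sub>m s * B) = 0"
  shows "\<exists>X \<in> carrier_mat n n. X * C - C * X = B"
proof (intro bexI[of _ "sol_mat B"] eq_matI)
  fix a k assume "a < dim_row B" and "k < dim_col B"
  then have a: "a < n" and k: "k < n" using B by auto
  have "(sol_mat B * C - C * sol_mat B) $$ (a,k) = (sol_mat B * C) $$ (a,k) - (C * sol_mat B) $$ (a,k)"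
    using C_carrier a k by simp
  also have "\<dots> = B $$ (a,k)"
  proof (cases "Suc k < n")
    case True
    then show ?thesis using sol_mat_mult_C[OF a k] C_mult_sol_mat[OF a k] sol_Suc[OF B a k] by simp
  next
    case False
    then have "Suc k = n" using k by simp
    have "0 = defect B a" using defect_zero[OF B tr0 a] by simp
    also have "\<dots> = (\<Sum>b<n. char_coeff b * sol B b a) + sol B n a"
      unfolding defect_def by (simp add: lessThan_Suc_atMost[symmetric] char_coeff_def)
    finally have "(\<Sum>b<n. char_coeff b * sol B b a) + sol B n a = 0" by simp
    then have "- (\<Sum>b<n. char_coeff b * sol B b a) = sol B (Suc k) a"
      using \<open>Suc k = n\<close> by (simp add: neg_eq_iff_add_eq_0)
    then show ?thesis using False sol_mat_mult_C[OF a k] C_mult_sol_mat[OF a k] sol_Suc[OF B a k] by simp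
  qed
  finally show "(sol_mat B * C - C * sol_mat B) $$ (a,k) = B $$ (a,k)" .
qed (use B C_carrier in auto)
end

lemma krylov_mat_shift:
  assumes A: "A \<in> carrier_mat n n" and v: "v \<in> carrier_vec n" and b: "b < n" and k: "Suc k < n"
  shows "(A * krylov_mat A v) $$ (b,k) = krylov_mat A v $$ (b, Suc k)"
proof -
  have "(A * krylov_mat A v) $$ (b,k) = (A *\<^sub>v (A ^\<^sub>m k *\<^sub>v v)) $ b"
    using A v b k unfolding krylov_mat_def
    by (auto simp: scalar_prod_def lessThan_atLeast0 index_mult_mat_sum intro!: sum.cong)
  also have "A *\<^sub>v (A ^\<^sub>m k *\<^sub>v v) = A ^\<^sub>m Suc k *\<^sub>v v"
    using pow_mat_Suc_left[OF A, of k] assoc_mult_mat_vec[of A n n "A ^\<^sub>m k" n v] A v by simp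
  finally show ?thesis unfolding krylov_mat_def using v b k by simp
qed

lemma companion_shaped_krylov_conj:
  assumes A: "A \<in> carrier_mat n n" and v: "v \<in> carrier_vec n" and n: "0 < n"
    and Q: "Q \<in> carrier_mat n n" and QP: "Q * krylov_mat A v = 1\<^sub>m n"
  shows "companion_shaped n (Q * A * krylov_mat A v)"
proof
  let ?P = "krylov_mat A v"
  have P: "?P \<in> carrier_mat n n" using v by simp
  fix i k assume i: "i < n" and k: "Suc k < n"
  have "Q * A * ?P = Q * (A * ?P)" using A P Q by (simp add: assoc_mult_mat[of _ n n _ n _ n])
  then have "(Q * A * ?P) $$ (i,k) = (\<Sum>b<n. Q $$ (i,b) * (A * ?P) $$ (b,k))"
    using index_mult_mat_sum[OF Q _ i, of "A * ?P" n k] A P k by simp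
  also have "\<dots> = (Q * ?P) $$ (i, Suc k)"
    using krylov_mat_shift[OF A v] k index_mult_mat_sum[OF Q P i k] by (auto intro: sum.cong)
  finally show "(Q * A * ?P) $$ (i,k) = (if i = Suc k then 1 else 0)" using QP i k by simp
qed (use n A Q v in \<open>auto simp: square_mult_carrier_mat\<close>)

lemma mat_trace_pow_conj:
  fixes A :: "'a :: comm_ring_1 mat"
  assumes A: "A \<in> carrier_mat n n" and B: "B \<in> carrier_mat n n"
    and P: "P \<in> carrier_mat n n" and Q: "Q \<in> carrier_mat n n" and PQ: "P * Q = 1\<^sub>m n" and QP: "Q * P = 1\<^sub>m n"
  shows "mat_trace ((Q * A * P) ^\<^sub>m s * (Q * B * P)) = mat_trace (A ^\<^sub>m s * B)"
proof -
  have "(Q * A * P) ^\<^sub>m s = Q * A ^\<^sub>m s * P"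
    by (rule similar_mat_wit_pow_id, rule similar_mat_witI[OF QP PQ]) (use A P Q in auto)
  then have "(Q * A * P) ^\<^sub>m s * (Q * B * P) = Q * A ^\<^sub>m s * (P * Q) * B * P"
    using A B P Q by (simp add: assoc_mult_mat[of _ n n _ n _ n] square_mult_carrier_mat)
  also have "\<dots> = Q * (A ^\<^sub>m s * B) * P"
    using A B P Q PQ by (simp add: assoc_mult_mat[of _ n n _ n _ n] square_mult_carrier_mat)
  finally have "mat_trace ((Q * A * P) ^\<^sub>m s * (Q * B * P)) = mat_trace (Q * (A ^\<^sub>m s * B) * P)" by simp
  also have "\<dots> = mat_trace (A ^\<^sub>m s * B)"
    by (rule mat_trace_similar) (use A B P Q PQ in auto)
  finally show ?thesis .
qed

lemma commutator_conj:
  fixes C :: "'a :: comm_ring_1 mat"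
  assumes C: "C \<in> carrier_mat n n" and Y: "Y \<in> carrier_mat n n"
    and P: "P \<in> carrier_mat n n" and Q: "Q \<in> carrier_mat n n" and QP: "Q * P = 1\<^sub>m n"
  shows "(P * Y * Q) * (P * C * Q) - (P * C * Q) * (P * Y * Q) = P * (Y * C - C * Y) * Q"
proof -
  have "(P * Y * Q) * (P * C * Q) = P * (Y * C) * Q" and "(P * C * Q) * (P * Y * Q) = P * (C * Y) * Q"
    using C Y P Q
    by (simp_all add: assoc_mult_mat[of _ n n _ n _ n] square_mult_carrier_mat
        mult_inverse_cancel_left[OF Q P QP, where m = n])
  moreover have "P * (Y * C - C * Y) = P * (Y * C) - P * (C * Y)"
    by (rule mult_minus_distrib_mat) (use Y C P in auto)
  moreover have "(P * (Y * C) - P * (C * Y)) * Q = P * (Y * C) * Q - P * (C * Y) * Q"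
    by (rule minus_mult_distrib_mat) (use Y C P Q in auto)
  ultimately show ?thesis by simp
qed

lemma commutator_eq_solvable_krylov:
  fixes A B :: "complex mat"
  assumes A: "A \<in> carrier_mat n n" and v: "v \<in> carrier_vec n" and B: "B \<in> carrier_mat n n"
    and det: "det (krylov_mat A v) \<noteq> 0"
    and tr0: "\<And>s. s < n \<Longrightarrow> mat_trace (A ^\<^sub>m s * B) = 0"
  shows "\<exists>X \<in> carrier_mat n n. X * A - A * X = B"
proof (cases "n = 0")
  case True
  show ?thesis using A B True by (intro bexI[of _ B], intro eq_matI) auto
next
  case False
  define P where "P = krylov_mat A v"
  define Q where "Q = (1 / det P) \<cdot>\<^sub>m adj_mat P"
  have P: "P \<in> carrier_mat n n" unfolding P_def using v by simp
  have Q: "Q \<in> carrier_mat n n" unfolding Q_def using adj_mat(1)[OF P] by simp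
  have PQ: "P * Q = 1\<^sub>m n" and QP: "Q * P = 1\<^sub>m n"
    unfolding Q_def using adj_mat_inverse[OF P] det P_def by auto
  have unconj: "P * (Q * M * P) * Q = M" if "M \<in> carrier_mat n n" for M
    using that P Q PQ
    by (simp add: assoc_mult_mat[of _ n n _ n _ n] square_mult_carrier_mat
        mult_inverse_cancel_left[OF P Q PQ, where m = n])
  have comp: "companion_shaped n (Q * A * P)"
    unfolding P_def by (rule companion_shaped_krylov_conj[OF A v _ Q QP[unfolded P_def]]) (use False in simp)
  have tr: "mat_trace ((Q * A * P) ^\<^sub>m s * (Q * B * P)) = 0" if "s < n" for s
    using mat_trace_pow_conj[OF A B P Q PQ QP] tr0[OF that] by simp
  have "Q * B * P \<in> carrier_mat n n" using B P Q by simp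
  from companion_shaped.commutator_eq_solvable[OF comp this tr]
  obtain Y where Y: "Y \<in> carrier_mat n n" and eq: "Y * (Q * A * P) - (Q * A * P) * Y = Q * B * P"
    by blast
  have "Q * A * P \<in> carrier_mat n n" using A P Q by simp
  from commutator_conj[OF this Y P Q QP]
  have "(P * Y * Q) * A - A * (P * Y * Q) = P * (Q * B * P) * Q"
    unfolding unconj[OF A] eq .
  then show ?thesis using unconj[OF B] P Q Y by (intro bexI[of _ "P * Y * Q"]) auto
qed

section \<open>Traces along analytic discs in \<open>\<Omega>\<^sub>n\<close>\<close>

lemma upper_triangular_pow:
  assumes T: "T \<in> carrier_mat n n" and ut: "upper_triangular T"
  shows "upper_triangular (T ^\<^sub>m k) \<and> (\<forall>i<n. (T ^\<^sub>m k) $$ (i,i) = T $$ (i,i) ^ k)"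
proof (induction k)
  case 0
  then show ?case using T by auto
next
  case (Suc k)
  have Tk: "T ^\<^sub>m k \<in> carrier_mat n n" using T by simp
  have low: "(T ^\<^sub>m k) $$ (i,l) = 0" if "l < i" "i < n" for i l
    using Suc.IH that Tk by auto
  have lowT: "T $$ (i,l) = 0" if "l < i" "i < n" for i l
    using ut that T by auto
  have "upper_triangular (T ^\<^sub>m Suc k)"
  proof (rule upper_triangularI)
    fix i j assume ji: "j < i" and i: "i < dim_row (T ^\<^sub>m Suc k)"
    then have i: "i < n" using T by simp
    have "(T ^\<^sub>m Suc k) $$ (i,j) = (\<Sum>l<n. (T ^\<^sub>m k) $$ (i,l) * T $$ (l,j))"
      using index_mult_mat_sum[OF Tk T i] ji i by simp
    also have "\<dots> = 0"
    proof (intro sum.neutral ballI)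
      fix l assume l: "l \<in> {..<n}"
      show "(T ^\<^sub>m k) $$ (i,l) * T $$ (l,j) = 0"
        using low[of l i] lowT[of j l] i l ji by (cases "l < i") auto
    qed
    finally show "(T ^\<^sub>m Suc k) $$ (i,j) = 0" .
  qed
  moreover have "(T ^\<^sub>m Suc k) $$ (i,i) = T $$ (i,i) ^ Suc k" if i: "i < n" for i
  proof -
    have "(T ^\<^sub>m Suc k) $$ (i,i) = (\<Sum>l<n. (T ^\<^sub>m k) $$ (i,l) * T $$ (l,i))"
      using index_mult_mat_sum[OF Tk T i i] by simp
    also have "\<dots> = (\<Sum>l<n. if l = i then (T ^\<^sub>m k) $$ (i,l) * T $$ (l,i) else 0)"
    proof (intro sum.cong refl)
      fix l assume l: "l \<in> {..<n}"
      show "(T ^\<^sub>m k) $$ (i,l) * T $$ (l,i) = (if l = i then (T ^\<^sub>m k) $$ (i,l) * T $$ (l,i) else 0)"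
        using low[of l i] lowT[of i l] i l by (cases "l < i"; cases "l = i") auto
    qed
    also have "\<dots> = (T ^\<^sub>m k) $$ (i,i) * T $$ (i,i)" using i by simp
    finally show ?thesis using Suc.IH i by (simp del: power_Suc add: power_Suc2)
  qed
  ultimately show ?case by blast
qed

lemma spectrum_similar:
  assumes "similar_mat A (B :: 'a :: field mat)"
  shows "spectrum A = spectrum B"
proof -
  obtain n P Q where "{A, B, P, Q} \<subseteq> carrier_mat n n"
    using similar_matD[OF assms] by blast
  then show ?thesis
    using char_poly_similar[OF assms] spectrum_root_char_poly[of A n] spectrum_root_char_poly[of B n] by simp
qed

lemma upper_triangular_diag_in_spectrum:
  fixes T :: "'a :: field mat"
  assumes T: "T \<in> carrier_mat n n" "upper_triangular T" and i: "i < n"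
  shows "T $$ (i,i) \<in> spectrum T"
proof -
  have "T $$ (i,i) \<in> set (diag_mat T)" using i T(1) unfolding diag_mat_def by auto
  then have "poly (char_poly T) (T $$ (i,i)) = 0"
    unfolding char_poly_upper_triangular[OF T] by (rule linear_poly_root)
  then show ?thesis unfolding spectrum_root_char_poly[OF T(1)] by simp
qed

lemma trace_pow_norm_le:
  assumes M: "(M :: complex mat) \<in> carrier_mat n n" and sr: "spectral_radius M \<le> 1"
  shows "cmod (mat_trace (M ^\<^sub>m k)) \<le> n"
proof -
  obtain as where "char_poly M = (\<Prod>a\<leftarrow>as. [:- a, 1:])"
    using char_poly_factorized[OF M] by auto
  then obtain T where T: "T \<in> carrier_mat n n" "upper_triangular T" "similar_mat M T"
    using schur_decomposition_exists[OF M] by blast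
  obtain n' P Q where PQ: "{M,T,P,Q} \<subseteq> carrier_mat n' n'" "P * Q = 1\<^sub>m n'" "Q * P = 1\<^sub>m n'" "M = P * T * Q"
    using similar_matD[OF T(3)] by blast
  have n': "n' = n" using PQ(1) M by auto
  have "M ^\<^sub>m k = P * T ^\<^sub>m k * Q"
    by (rule similar_mat_wit_pow_id, rule similar_mat_witI[OF PQ(2-4)]) (use PQ(1) in auto)
  then have tr: "mat_trace (M ^\<^sub>m k) = (\<Sum>i<n. T $$ (i,i) ^ k)"
    using mat_trace_similar[of "T ^\<^sub>m k" n P Q] PQ n' T(1) upper_triangular_pow[OF T(1,2), of k]
    by (simp add: mat_trace_carrier[of "T ^\<^sub>m k" n])
  have ev: "cmod (T $$ (i,i)) \<le> 1" if i: "i < n" for i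
  proof -
    have "T $$ (i,i) \<in> spectrum M"
      using upper_triangular_diag_in_spectrum[OF T(1,2) i] spectrum_similar[OF T(3)] by simp
    then have "cmod (T $$ (i,i)) \<le> spectral_radius M"
      using spectral_radius_mem_max(2)[of M n "cmod (T $$ (i,i))"] M i by auto
    with sr show ?thesis by simp
  qed
  have "cmod (\<Sum>i<n. T $$ (i,i) ^ k) \<le> (\<Sum>i<n. cmod (T $$ (i,i)) ^ k)"
    by (rule order.trans[OF norm_sum]) (simp add: norm_power)
  also have "\<dots> \<le> (\<Sum>i<(n::nat). 1)"
    by (intro sum_mono) (simp add: ev power_le_one)
  finally show ?thesis using tr by simp
qed

definition mat_has_deriv :: "nat \<Rightarrow> (complex \<Rightarrow> complex mat) \<Rightarrow> complex mat \<Rightarrow> complex \<Rightarrow> bool" where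
  "mat_has_deriv n F D z \<longleftrightarrow> (\<forall>i<n. \<forall>j<n. ((\<lambda>w. F w $$ (i,j)) has_field_derivative D $$ (i,j)) (at z))"

lemma mat_has_deriv_mult:
  assumes F: "\<And>w. F w \<in> carrier_mat n n" and G: "\<And>w. G w \<in> carrier_mat n n"
    and D: "D \<in> carrier_mat n n" and E: "E \<in> carrier_mat n n"
    and dF: "mat_has_deriv n F D z" and dG: "mat_has_deriv n G E z"
  shows "mat_has_deriv n (\<lambda>w. F w * G w) (D * G z + F z * E) z"
  unfolding mat_has_deriv_def
proof (intro allI impI)
  fix i j assume i: "i < n" and j: "j < n"
  have eq: "(\<lambda>w. (F w * G w) $$ (i,j)) = (\<lambda>w. \<Sum>l<n. F w $$ (i,l) * G w $$ (l,j))"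
    using index_mult_mat_sum[OF F G i j] by auto
  have "((\<lambda>w. \<Sum>l<n. F w $$ (i,l) * G w $$ (l,j)) has_field_derivative
        (\<Sum>l<n. F z $$ (i,l) * E $$ (l,j) + D $$ (i,l) * G z $$ (l,j))) (at z)"
    using dF dG i j unfolding mat_has_deriv_def by (intro DERIV_sum DERIV_mult') auto
  moreover have "(\<Sum>l<n. F z $$ (i,l) * E $$ (l,j) + D $$ (i,l) * G z $$ (l,j)) = (D * G z + F z * E) $$ (i,j)"
    using index_mult_mat_sum[OF D G[of z] i j] index_mult_mat_sum[OF F[of z] E i j] D G[of z] F[of z] E i j
    by (simp add: sum.distrib add.commute)
  ultimately show "((\<lambda>w. (F w * G w) $$ (i,j)) has_field_derivative (D * G z + F z * E) $$ (i,j)) (at z)"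
    unfolding eq by simp
qed

fun pow_mat_deriv :: "nat \<Rightarrow> complex mat \<Rightarrow> complex mat \<Rightarrow> nat \<Rightarrow> complex mat" where
  "pow_mat_deriv n A D 0 = 0\<^sub>m n n"
| "pow_mat_deriv n A D (Suc k) = pow_mat_deriv n A D k * A + A ^\<^sub>m k * D"

lemma pow_mat_deriv_carrier: "A \<in> carrier_mat n n \<Longrightarrow> D \<in> carrier_mat n n \<Longrightarrow> pow_mat_deriv n A D k \<in> carrier_mat n n"
  by (induction k) auto

lemma mat_has_deriv_pow:
  assumes F: "\<And>w. F w \<in> carrier_mat n n" and D: "D \<in> carrier_mat n n" and dF: "mat_has_deriv n F D z"
  shows "mat_has_deriv n (\<lambda>w. F w ^\<^sub>m k) (pow_mat_deriv n (F z) D k) z"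
proof (induction k)
  case 0
  have dr: "dim_row (F w) = n" for w using F[of w] by (simp add: carrier_matD)
  have "(\<lambda>w. (F w ^\<^sub>m 0) $$ (i,j)) = (\<lambda>w. (1\<^sub>m n :: complex mat) $$ (i,j))" for i j
    using dr by simp
  then show ?case unfolding mat_has_deriv_def by simp
next
  case (Suc k)
  have "mat_has_deriv n (\<lambda>w. F w ^\<^sub>m k * F w) (pow_mat_deriv n (F z) D k * F z + F z ^\<^sub>m k * D) z"
    by (rule mat_has_deriv_mult[OF _ F pow_mat_deriv_carrier[OF F D] D Suc.IH dF]) (use F in simp)
  then show ?case by simp
qed

lemma mat_trace_has_deriv:
  assumes F: "\<And>w. F w \<in> carrier_mat n n" and D: "D \<in> carrier_mat n n" and dF: "mat_has_deriv n F D z"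
  shows "((\<lambda>w. mat_trace (F w)) has_field_derivative mat_trace D) (at z)"
proof -
  have "dim_row (F w) = n" for w using F[of w] by simp
  then have "(\<lambda>w. mat_trace (F w)) = (\<lambda>w. \<Sum>i<n. F w $$ (i,i))"
    by (simp add: mat_trace_def)
  then show ?thesis
    using dF unfolding mat_has_deriv_def mat_trace_carrier[OF D] by (auto intro!: DERIV_sum)
qed

lemma mat_trace_pow_mat_deriv:
  assumes A: "A \<in> carrier_mat n n" and D: "D \<in> carrier_mat n n"
  shows "M \<in> carrier_mat n n \<Longrightarrow> M * A = A * M \<Longrightarrow>
     mat_trace (pow_mat_deriv n A D k * M) = of_nat k * mat_trace (D * A ^\<^sub>m (k - 1) * M)"
proof (induction k arbitrary: M)
  case 0
  then show ?case using A by (simp add: left_mult_zero_mat[of M n n])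
next
  case (Suc k)
  note M = Suc.prems(1) and c = Suc.prems(2)
  have dk: "pow_mat_deriv n A D k \<in> carrier_mat n n" by (rule pow_mat_deriv_carrier[OF A D])
  have AMc: "A * M \<in> carrier_mat n n" using A M by simp
  have cAM: "(A * M) * A = A * (A * M)"
    using A M c by (simp add: assoc_mult_mat[of _ n n _ n _ n])
  have "pow_mat_deriv n A D (Suc k) * M = pow_mat_deriv n A D k * (A * M) + A ^\<^sub>m k * D * M"
    using dk A D M by (simp add: add_mult_distrib_mat[of _ n n _ _ n] assoc_mult_mat[of _ n n _ n _ n] square_mult_carrier_mat)
  then have "mat_trace (pow_mat_deriv n A D (Suc k) * M) = mat_trace (pow_mat_deriv n A D k * (A * M)) + mat_trace (A ^\<^sub>m k * D * M)"
    using dk A D M by (simp add: mat_trace_add[of _ n] square_mult_carrier_mat)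
  also have "mat_trace (pow_mat_deriv n A D k * (A * M)) = of_nat k * mat_trace (D * A ^\<^sub>m k * M)"
  proof (cases k)
    case 0 then show ?thesis using Suc.IH[OF AMc cAM] by simp
  next
    case (Suc k')
    have e: "A ^\<^sub>m k' * (A * M) = A ^\<^sub>m k * M"
      using A M Suc by (simp add: assoc_mult_mat[of "A ^\<^sub>m k'" n n A n M n, symmetric])
    have "D * A ^\<^sub>m (k - 1) * (A * M) = D * (A ^\<^sub>m k' * (A * M))"
      using A D M Suc by (simp add: assoc_mult_mat[of _ n n _ n _ n])
    also have "\<dots> = D * A ^\<^sub>m k * M" unfolding e using A D M by (simp add: assoc_mult_mat[of _ n n _ n _ n])
    finally have "D * A ^\<^sub>m (k - 1) * (A * M) = D * A ^\<^sub>m k * M" .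
    then show ?thesis using Suc.IH[OF AMc cAM] by simp
  qed
  also have "mat_trace (A ^\<^sub>m k * D * M) = mat_trace (D * A ^\<^sub>m k * M)"
  proof -
    have "mat_trace (A ^\<^sub>m k * D * M) = mat_trace (A ^\<^sub>m k * (D * M))"
      using A D M by (simp add: assoc_mult_mat[of _ n n _ n _ n])
    also have "\<dots> = mat_trace ((D * M) * A ^\<^sub>m k)" using A D M by (intro mat_trace_mult_comm) auto
    also have "(D * M) * A ^\<^sub>m k = D * (A ^\<^sub>m k * M)"
      using A D M commute_pow_mat[OF A M c, of k] by (simp add: assoc_mult_mat[of _ n n _ n _ n])
    also have "\<dots> = D * A ^\<^sub>m k * M" using A D M by (simp add: assoc_mult_mat[of _ n n _ n _ n])
    finally show ?thesis .
  qed
  finally show ?case by (simp add: algebra_simps)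
qed

lemma mat_trace_pow_mat_deriv_Suc:
  assumes A: "A \<in> carrier_mat n n" and D: "D \<in> carrier_mat n n"
  shows "mat_trace (pow_mat_deriv n A D (Suc s)) = of_nat (Suc s) * mat_trace (A ^\<^sub>m s * D)"
proof -
  have "mat_trace (pow_mat_deriv n A D (Suc s)) = mat_trace (pow_mat_deriv n A D (Suc s) * 1\<^sub>m n)"
    by (simp only: right_mult_one_mat[OF pow_mat_deriv_carrier[OF A D]])
  also have "\<dots> = of_nat (Suc s) * mat_trace (D * A ^\<^sub>m s * 1\<^sub>m n)"
    using mat_trace_pow_mat_deriv[OF A D, of "1\<^sub>m n" "Suc s"] A by (simp del: pow_mat_deriv.simps)
  also have "mat_trace (D * A ^\<^sub>m s * 1\<^sub>m n) = mat_trace (A ^\<^sub>m s * D)"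
    using A D mat_trace_mult_comm[of D n n "A ^\<^sub>m s"] by simp
  finally show ?thesis .
qed

lemma mat_holomorphic_on_has_deriv:
  assumes "mat_holomorphic_on n \<phi> S" "open S" "z \<in> S"
  shows "mat_has_deriv n \<phi> (mat_deriv n \<phi> z) z"
  using assms unfolding mat_has_deriv_def mat_holomorphic_on_def mat_deriv_def
  by (auto intro!: holomorphic_derivI)

text \<open>Cauchy's estimate for \<open>w \<mapsto> tr (\<phi>(w)\<^sup>s\<^sup>+\<^sup>1)\<close> on the disc of radius \<open>1/2\<close>, where it is
  bounded by \<open>n\<close> because \<open>\<phi>\<close> takes values in \<open>\<Omega>\<^sub>n\<close>.\<close>

lemma trace_deriv_Cauchy_bound:
  assumes phi: "mat_holomorphic_on n \<phi> (ball 0 1)"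
    and img: "\<phi> ` ball 0 1 \<subseteq> Omega n" and phi0: "\<phi> 0 = A"
  shows "cmod (of_nat (Suc s) * mat_trace (A ^\<^sub>m s * mat_deriv n \<phi> 0)) \<le> 2 * real n"
proof -
  have "\<phi> 0 \<in> Omega n" using img by auto
  then have A: "A \<in> carrier_mat n n" using phi0 unfolding Omega_def by auto
  define \<psi> where "\<psi> = (\<lambda>w. mat n n (\<lambda>(i,j). \<phi> w $$ (i,j)))"
  have \<psi>_carrier: "\<psi> w \<in> carrier_mat n n" for w unfolding \<psi>_def by simp
  have \<psi>_eq: "\<psi> w = \<phi> w" if "w \<in> ball 0 1" for w
  proof -
    have "\<phi> w \<in> carrier_mat n n" using img that unfolding Omega_def by blast
    then show ?thesis unfolding \<psi>_def by (intro eq_matI) auto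
  qed
  define D where "D = mat_deriv n \<phi>"
  have D_carrier: "D z \<in> carrier_mat n n" for z unfolding D_def mat_deriv_def by simp
  have \<psi>_deriv: "mat_has_deriv n \<psi> (D z) z" if z: "z \<in> ball 0 1" for z
    using mat_holomorphic_on_has_deriv[OF phi open_ball z] unfolding D_def mat_has_deriv_def \<psi>_def
    by simp
  define g where "g = (\<lambda>w. mat_trace (\<psi> w ^\<^sub>m Suc s))"
  have g_deriv: "(g has_field_derivative mat_trace (pow_mat_deriv n (\<psi> z) (D z) (Suc s))) (at z)"
    if "z \<in> ball 0 1" for z
    unfolding g_def
    by (rule mat_trace_has_deriv[OF _ pow_mat_deriv_carrier[OF \<psi>_carrier D_carrier]
          mat_has_deriv_pow[OF \<psi>_carrier D_carrier \<psi>_deriv[OF that]]])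
      (rule pow_carrier_mat[OF \<psi>_carrier])
  then have hol: "g holomorphic_on ball 0 1"
    using holomorphic_on_open[of "ball 0 1" g] by blast
  have "norm ((deriv ^^ 1) g 0) \<le> (fact 1 :: real) * real n / (1/2) ^ 1"
  proof (rule Cauchy_inequality)
    show "g holomorphic_on ball 0 (1/2)" by (rule holomorphic_on_subset[OF hol]) auto
    show "continuous_on (cball 0 (1/2)) g"
      by (rule continuous_on_subset[OF holomorphic_on_imp_continuous_on[OF hol]]) auto
    fix x :: complex assume "norm (0 - x) = 1/2"
    then have x: "x \<in> ball 0 1" by auto
    then have "\<phi> x \<in> Omega n" using img by auto
    then show "norm (g x) \<le> n"
      unfolding g_def \<psi>_eq[OF x] Omega_def using trace_pow_norm_le[of "\<phi> x" n "Suc s"] by auto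
  qed simp
  moreover have "deriv g 0 = of_nat (Suc s) * mat_trace (A ^\<^sub>m s * D 0)"
    using DERIV_imp_deriv[OF g_deriv[of 0]] \<psi>_eq[of 0] phi0
      mat_trace_pow_mat_deriv_Suc[OF A D_carrier] by simp
  ultimately show ?thesis unfolding D_def by simp
qed

lemma kobayashi_zero_imp_trace_zero:
  assumes A: "A \<in> Omega n" and B: "B \<in> carrier_mat n n"
    and kob: "kobayashi n (Omega n) A B = 0"
  shows "mat_trace (A ^\<^sub>m s * B) = 0"
proof (rule ccontr)
  let ?S = "{\<alpha>. \<exists>\<phi>. mat_holomorphic_on n \<phi> (ball 0 1) \<and> \<phi> ` ball 0 1 \<subseteq> Omega n \<and>
       \<phi> 0 = A \<and> \<alpha> \<cdot>\<^sub>m mat_deriv n \<phi> 0 = B}"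
  define t where "t = cmod (mat_trace (A ^\<^sub>m s * B))"
  assume "mat_trace (A ^\<^sub>m s * B) \<noteq> 0"
  then have t0: "t > 0" unfolding t_def by simp
  have bound: "t \<le> 2 * real n * cmod \<alpha>" if \<alpha>: "\<alpha> \<in> ?S" for \<alpha>
  proof -
    obtain \<phi> where phi: "mat_holomorphic_on n \<phi> (ball 0 1)" "\<phi> ` ball 0 1 \<subseteq> Omega n" "\<phi> 0 = A"
      and B_eq: "\<alpha> \<cdot>\<^sub>m mat_deriv n \<phi> 0 = B"
      using \<alpha> by auto
    have A_carrier: "A \<in> carrier_mat n n" using A unfolding Omega_def by auto
    have D: "mat_deriv n \<phi> 0 \<in> carrier_mat n n" unfolding mat_deriv_def by simp
    have "t = cmod (mat_trace (\<alpha> \<cdot>\<^sub>m (A ^\<^sub>m s * mat_deriv n \<phi> 0)))"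
      unfolding t_def B_eq[symmetric] using A_carrier D by (simp add: mult_smult_distrib[of _ n n])
    also have "\<dots> = cmod \<alpha> * cmod (mat_trace (A ^\<^sub>m s * mat_deriv n \<phi> 0))"
      using A_carrier D by (simp add: mat_trace_smult[of _ n] norm_mult square_mult_carrier_mat)
    also have "\<dots> \<le> cmod \<alpha> * (2 * real n)"
    proof (rule mult_left_mono)
      let ?m = "cmod (mat_trace (A ^\<^sub>m s * mat_deriv n \<phi> 0))"
      have "?m \<le> real (Suc s) * ?m" by (simp add: mult_le_cancel_right1)
      also have "\<dots> \<le> 2 * real n"
        using trace_deriv_Cauchy_bound[OF phi, of s] by (simp only: norm_mult norm_of_nat)
      finally show "?m \<le> 2 * real n" .
    qed simp
    finally show ?thesis by (simp add: mult_ac)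
  qed
  have "(INF \<alpha>\<in>?S. ereal (cmod \<alpha>)) < ereal (t / (2 * real n + 1))"
    using kob t0 unfolding kobayashi_def by simp
  then obtain \<alpha> where \<alpha>: "\<alpha> \<in> ?S" and small: "cmod \<alpha> < t / (2 * real n + 1)"
    unfolding INF_less_iff by auto
  have "t \<le> 2 * real n * cmod \<alpha>" using \<alpha> by (rule bound)
  also have "\<dots> \<le> 2 * real n * (t / (2 * real n + 1))" using small by (intro mult_left_mono) auto
  also have "\<dots> < t" using t0 by (simp add: field_simps)
  finally show False by simp
qed

section \<open>Isospectral entire curves\<close>

lemma mat_holomorphic_on_mult:
  assumes F: "\<And>w. F w \<in> carrier_mat n n" and G: "\<And>w. G w \<in> carrier_mat n n"
    and hF: "mat_holomorphic_on n F S" and hG: "mat_holomorphic_on n G S"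
  shows "mat_holomorphic_on n (\<lambda>w. F w * G w) S"
  unfolding mat_holomorphic_on_def
proof (intro allI impI)
  fix i j assume i: "i < n" and j: "j < n"
  have eq: "(\<lambda>w. (F w * G w) $$ (i,j)) = (\<lambda>w. \<Sum>l<n. F w $$ (i,l) * G w $$ (l,j))"
    using index_mult_mat_sum[OF F G i j] by auto
  show "(\<lambda>w. (F w * G w) $$ (i,j)) holomorphic_on S"
    unfolding eq using hF hG i j unfolding mat_holomorphic_on_def
    by (intro holomorphic_on_sum holomorphic_on_mult) auto
qed

lemma holomorphic_on_det:
  assumes F: "\<And>w. F w \<in> carrier_mat n n" and hF: "mat_holomorphic_on n F S"
  shows "(\<lambda>w. det (F w)) holomorphic_on S"
proof -
  have eq: "(\<lambda>w. det (F w)) =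
      (\<lambda>w. \<Sum>p \<in> {p. p permutes {0 ..< n}}. signof p * (\<Prod>i = 0 ..< n. F w $$ (i, p i)))"
    using det_def'[OF F] by auto
  show ?thesis unfolding eq
  proof (intro holomorphic_on_sum holomorphic_on_mult holomorphic_on_prod holomorphic_on_const)
    fix p i assume p: "p \<in> {p. p permutes {0 ..< n}}" and i: "i \<in> {0..<n}"
    have "p i < n" using p i permutes_in_image[of p "{0..<n}" i] by auto
    then show "(\<lambda>w. F w $$ (i, p i)) holomorphic_on S" using hF i unfolding mat_holomorphic_on_def by auto
  qed
qed

lemma mat_holomorphic_on_adj:
  assumes F: "\<And>w. F w \<in> carrier_mat n n" and hF: "mat_holomorphic_on n F S"
  shows "mat_holomorphic_on n (\<lambda>w. adj_mat (F w)) S"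
  unfolding mat_holomorphic_on_def
proof (intro allI impI)
  fix i j assume i: "i < n" and j: "j < n"
  have dim: "dim_row (F w) = n" "dim_col (F w) = n" for w using F[of w] by auto
  have "mat_holomorphic_on (n - 1) (\<lambda>w. mat_delete (F w) j i) S"
    using hF dim unfolding mat_holomorphic_on_def by (auto simp: mat_delete_def)
  then have "(\<lambda>w. det (mat_delete (F w) j i)) holomorphic_on S"
    by (rule holomorphic_on_det[OF mat_delete_carrier[OF F]])
  moreover have "adj_mat (F w) $$ (i,j) = (-1)^(j+i) * det (mat_delete (F w) j i)" for w
    using i j dim by (simp add: adj_mat_def cofactor_def)
  ultimately show "(\<lambda>w. adj_mat (F w) $$ (i,j)) holomorphic_on S"
    by (simp add: holomorphic_on_mult holomorphic_on_const)
qed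

lemma mat_holomorphic_on_inverse:
  assumes F: "\<And>w. F w \<in> carrier_mat n n" and hF: "mat_holomorphic_on n F S"
    and d: "\<And>w. w \<in> S \<Longrightarrow> det (F w) \<noteq> 0"
  shows "mat_holomorphic_on n (\<lambda>w. (1 / det (F w)) \<cdot>\<^sub>m adj_mat (F w)) S"
  unfolding mat_holomorphic_on_def
proof (intro allI impI)
  fix i j assume i: "i < n" and j: "j < n"
  have "((1 / det (F w)) \<cdot>\<^sub>m adj_mat (F w)) $$ (i,j) = (1 / det (F w)) * adj_mat (F w) $$ (i,j)" for w
    using i j adj_mat(1)[OF F[of w]] by simp
  moreover have "(\<lambda>w. adj_mat (F w) $$ (i,j)) holomorphic_on S"
    using mat_holomorphic_on_adj[OF F hF] i j unfolding mat_holomorphic_on_def by auto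
  ultimately show "(\<lambda>w. ((1 / det (F w)) \<cdot>\<^sub>m adj_mat (F w)) $$ (i,j)) holomorphic_on S"
    using holomorphic_on_det[OF F hF] d by (auto intro!: holomorphic_intros)
qed

lemma conjugation_curve_deriv:
  assumes A: "A \<in> carrier_mat n n" and X: "X \<in> carrier_mat n n" and D: "D \<in> carrier_mat n n"
    and \<phi>: "\<And>w. \<phi> w \<in> carrier_mat n n" and S: "\<And>w. S w \<in> carrier_mat n n"
    and conj: "\<And>w. \<phi> w * S w = S w * A" and \<phi>0: "\<phi> 0 = A" and S0: "S 0 = 1\<^sub>m n"
    and d\<phi>: "mat_has_deriv n \<phi> D 0" and dS: "mat_has_deriv n S X 0"
  shows "D = X * A - A * X"
proof (rule eq_matI)
  fix i j assume "i < dim_row (X * A - A * X)" "j < dim_col (X * A - A * X)"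
  then have i: "i < n" and j: "j < n" using X A by auto
  have d1: "mat_has_deriv n (\<lambda>w. \<phi> w * S w) (D * S 0 + \<phi> 0 * X) 0"
    by (rule mat_has_deriv_mult[OF \<phi> S D X d\<phi> dS])
  have d2: "mat_has_deriv n (\<lambda>w. S w * A) (X * A + S 0 * 0\<^sub>m n n) 0"
    by (rule mat_has_deriv_mult[OF S _ X _ dS]) (use A in \<open>auto simp: mat_has_deriv_def\<close>)
  have "(D * S 0 + \<phi> 0 * X) $$ (i,j) = (X * A + S 0 * 0\<^sub>m n n) $$ (i,j)"
    using d1 d2 i j unfolding mat_has_deriv_def conj by (metis DERIV_unique)
  then show "D $$ (i,j) = (X * A - A * X) $$ (i,j)"
    unfolding S0 \<phi>0 using D A X i j by (simp add: eq_diff_eq)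
qed (use D A X in auto)

text \<open>\<open>ldu_curve n X w = (1 + w L) exp (w \<Delta>) (1 + w U)\<close>, where \<open>X = L + \<Delta> + U\<close> is the splitting
  into strictly lower, diagonal and strictly upper parts: an entire curve of invertible matrices
  through \<open>1\<close> with velocity \<open>X\<close>.  Conjugating \<open>A\<close> along it gives the required isospectral curve.\<close>

definition lower_part :: "nat \<Rightarrow> complex mat \<Rightarrow> complex mat" where
  "lower_part n X = mat n n (\<lambda>(i,j). if j < i then X $$ (i,j) else 0)"
definition upper_part :: "nat \<Rightarrow> complex mat \<Rightarrow> complex mat" where
  "upper_part n X = mat n n (\<lambda>(i,j). if i < j then X $$ (i,j) else 0)"
definition diag_part :: "nat \<Rightarrow> complex mat \<Rightarrow> complex mat" where
  "diag_part n X = mat n n (\<lambda>(i,j). if i = j then X $$ (i,i) else 0)"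
definition exp_diag :: "nat \<Rightarrow> complex mat \<Rightarrow> complex \<Rightarrow> complex mat" where
  "exp_diag n X w = mat n n (\<lambda>(i,j). if i = j then exp (w * X $$ (i,i)) else 0)"
definition ldu_curve :: "nat \<Rightarrow> complex mat \<Rightarrow> complex \<Rightarrow> complex mat" where
  "ldu_curve n X w = (1\<^sub>m n + w \<cdot>\<^sub>m lower_part n X) * exp_diag n X w * (1\<^sub>m n + w \<cdot>\<^sub>m upper_part n X)"

lemma ldu_parts_carrier [simp]:
  "lower_part n X \<in> carrier_mat n n" "upper_part n X \<in> carrier_mat n n" "diag_part n X \<in> carrier_mat n n"
  "exp_diag n X w \<in> carrier_mat n n" "ldu_curve n X w \<in> carrier_mat n n"
  unfolding lower_part_def upper_part_def diag_part_def exp_diag_def ldu_curve_def by auto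

lemma dim_ldu_parts [simp]:
  "dim_row (lower_part n X) = n" "dim_col (lower_part n X) = n" "dim_row (upper_part n X) = n" "dim_col (upper_part n X) = n"
  "dim_row (diag_part n X) = n" "dim_col (diag_part n X) = n" "dim_row (exp_diag n X w) = n" "dim_col (exp_diag n X w) = n"
  unfolding lower_part_def upper_part_def diag_part_def exp_diag_def by auto

lemma det_ldu_curve_nonzero: "det (ldu_curve n X w) \<noteq> 0"
proof -
  have c: "1\<^sub>m n + w \<cdot>\<^sub>m lower_part n X \<in> carrier_mat n n" "1\<^sub>m n + w \<cdot>\<^sub>m upper_part n X \<in> carrier_mat n n" by auto
  have d1: "det (1\<^sub>m n + w \<cdot>\<^sub>m lower_part n X) = 1"
  proof -
    have "det (1\<^sub>m n + w \<cdot>\<^sub>m lower_part n X) = prod_list (diag_mat (1\<^sub>m n + w \<cdot>\<^sub>m lower_part n X))"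
      by (rule det_lower_triangular[OF _ c(1)]) (auto simp: lower_part_def)
    also have "\<dots> = 1" unfolding prod_list_diag_prod by (intro prod.neutral) (auto simp: lower_part_def)
    finally show ?thesis .
  qed
  have d2: "det (1\<^sub>m n + w \<cdot>\<^sub>m upper_part n X) = 1"
  proof -
    have "det (1\<^sub>m n + w \<cdot>\<^sub>m upper_part n X) = prod_list (diag_mat (1\<^sub>m n + w \<cdot>\<^sub>m upper_part n X))"
      by (rule det_upper_triangular[OF _ c(2)]) (auto simp: upper_part_def)
    also have "\<dots> = 1" unfolding prod_list_diag_prod by (intro prod.neutral) (auto simp: upper_part_def)
    finally show ?thesis .
  qed
  have d3: "det (exp_diag n X w) \<noteq> 0"
  proof -
    have "det (exp_diag n X w) = prod_list (diag_mat (exp_diag n X w))"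
      by (rule det_upper_triangular) (auto simp: exp_diag_def)
    also have "\<dots> \<noteq> 0" unfolding prod_list_diag_prod by (auto simp: exp_diag_def)
    finally show ?thesis .
  qed
  have "det (ldu_curve n X w) = det ((1\<^sub>m n + w \<cdot>\<^sub>m lower_part n X) * exp_diag n X w) * det (1\<^sub>m n + w \<cdot>\<^sub>m upper_part n X)"
    unfolding ldu_curve_def by (rule det_mult[of _ n]) (use c in \<open>simp_all add: square_mult_carrier_mat\<close>)
  also have "det ((1\<^sub>m n + w \<cdot>\<^sub>m lower_part n X) * exp_diag n X w) = det (1\<^sub>m n + w \<cdot>\<^sub>m lower_part n X) * det (exp_diag n X w)"
    by (rule det_mult[of _ n]) (use c in simp_all)
  finally show ?thesis using d1 d2 d3 by simp
qed

lemma ldu_curve_0: "ldu_curve n X 0 = 1\<^sub>m n"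
proof -
  have "exp_diag n X 0 = 1\<^sub>m n" unfolding exp_diag_def by (intro eq_matI) auto
  moreover have "1\<^sub>m n + 0 \<cdot>\<^sub>m lower_part n X = 1\<^sub>m n" "1\<^sub>m n + 0 \<cdot>\<^sub>m upper_part n X = (1\<^sub>m n :: complex mat)"
    by (intro eq_matI; auto simp: lower_part_def upper_part_def)+
  ultimately show ?thesis unfolding ldu_curve_def by simp
qed

lemma ldu_curve_holomorphic: "mat_holomorphic_on n (ldu_curve n X) UNIV"
proof -
  have hL: "mat_holomorphic_on n (\<lambda>w. 1\<^sub>m n + w \<cdot>\<^sub>m lower_part n X) UNIV"
    unfolding mat_holomorphic_on_def by (auto simp: lower_part_def intro!: holomorphic_intros)
  have hU: "mat_holomorphic_on n (\<lambda>w. 1\<^sub>m n + w \<cdot>\<^sub>m upper_part n X) UNIV"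
    unfolding mat_holomorphic_on_def by (auto simp: upper_part_def intro!: holomorphic_intros)
  have hE: "mat_holomorphic_on n (exp_diag n X) UNIV"
    unfolding mat_holomorphic_on_def
  proof (intro allI impI)
    fix i j assume "i < n" "j < n"
    then show "(\<lambda>w. exp_diag n X w $$ (i,j)) holomorphic_on UNIV"
      by (cases "i = j") (auto simp: exp_diag_def intro!: holomorphic_intros)
  qed
  have "mat_holomorphic_on n (\<lambda>w. (1\<^sub>m n + w \<cdot>\<^sub>m lower_part n X) * exp_diag n X w * (1\<^sub>m n + w \<cdot>\<^sub>m upper_part n X)) UNIV"
    by (intro mat_holomorphic_on_mult hL hU hE) (auto simp: square_mult_carrier_mat)
  then show ?thesis unfolding ldu_curve_def[abs_def] .
qed

lemma ldu_curve_has_deriv: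
  assumes X: "X \<in> carrier_mat n n"
  shows "mat_has_deriv n (ldu_curve n X) X 0"
proof -
  have dL: "mat_has_deriv n (\<lambda>w. 1\<^sub>m n + w \<cdot>\<^sub>m lower_part n X) (lower_part n X) 0"
    unfolding mat_has_deriv_def by (auto simp: lower_part_def intro!: derivative_eq_intros)
  have dU: "mat_has_deriv n (\<lambda>w. 1\<^sub>m n + w \<cdot>\<^sub>m upper_part n X) (upper_part n X) 0"
    unfolding mat_has_deriv_def by (auto simp: upper_part_def intro!: derivative_eq_intros)
  have dE: "mat_has_deriv n (exp_diag n X) (diag_part n X) 0"
    unfolding mat_has_deriv_def by (auto simp: exp_diag_def diag_part_def intro!: derivative_eq_intros)
  have E0: "exp_diag n X 0 = 1\<^sub>m n" unfolding exp_diag_def by (intro eq_matI) auto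
  have L0: "1\<^sub>m n + 0 \<cdot>\<^sub>m lower_part n X = 1\<^sub>m n" "1\<^sub>m n + 0 \<cdot>\<^sub>m upper_part n X = (1\<^sub>m n :: complex mat)"
    by (intro eq_matI; auto simp: lower_part_def upper_part_def)+
  have d1: "mat_has_deriv n (\<lambda>w. (1\<^sub>m n + w \<cdot>\<^sub>m lower_part n X) * exp_diag n X w) (lower_part n X * exp_diag n X 0 + (1\<^sub>m n + 0 \<cdot>\<^sub>m lower_part n X) * diag_part n X) 0"
    by (rule mat_has_deriv_mult[OF _ _ _ _ dL dE]) auto
  have d2: "mat_has_deriv n (\<lambda>w. (1\<^sub>m n + w \<cdot>\<^sub>m lower_part n X) * exp_diag n X w * (1\<^sub>m n + w \<cdot>\<^sub>m upper_part n X))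
     ((lower_part n X * exp_diag n X 0 + (1\<^sub>m n + 0 \<cdot>\<^sub>m lower_part n X) * diag_part n X) * (1\<^sub>m n + 0 \<cdot>\<^sub>m upper_part n X) +
      ((1\<^sub>m n + 0 \<cdot>\<^sub>m lower_part n X) * exp_diag n X 0) * upper_part n X) 0"
    by (rule mat_has_deriv_mult[OF _ _ _ _ d1 dU]) (simp_all add: square_mult_carrier_mat)
  have "(lower_part n X * exp_diag n X 0 + (1\<^sub>m n + 0 \<cdot>\<^sub>m lower_part n X) * diag_part n X) * (1\<^sub>m n + 0 \<cdot>\<^sub>m upper_part n X) +
      ((1\<^sub>m n + 0 \<cdot>\<^sub>m lower_part n X) * exp_diag n X 0) * upper_part n X = lower_part n X + diag_part n X + upper_part n X"
    unfolding E0 L0 by simp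
  also have "\<dots> = X" using X by (intro eq_matI) (auto simp: lower_part_def upper_part_def diag_part_def)
  finally show ?thesis using d2 unfolding ldu_curve_def[abs_def] by simp
qed

lemma isospectral_conjugation_curve:
  assumes A: "A \<in> Omega n" and X: "X \<in> carrier_mat n n"
    and S_carrier: "\<And>w. S w \<in> carrier_mat n n" and S_det: "\<And>w. det (S w) \<noteq> 0"
    and hS: "mat_holomorphic_on n S UNIV" and S0: "S 0 = 1\<^sub>m n" and dS: "mat_has_deriv n S X 0"
  shows "\<exists>\<phi>. mat_holomorphic_on n \<phi> UNIV \<and> (\<forall>w. \<phi> w \<in> Omega n) \<and>
           \<phi> 0 = A \<and> mat_deriv n \<phi> 0 = X * A - A * X \<and> (\<forall>w. spectrum (\<phi> w) = spectrum A)"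
proof -
  have A_carrier: "A \<in> carrier_mat n n" using A unfolding Omega_def by auto
  define T where "T = (\<lambda>w. (1 / det (S w)) \<cdot>\<^sub>m adj_mat (S w))"
  define \<phi> where "\<phi> = (\<lambda>w. S w * A * T w)"
  have T_carrier: "T w \<in> carrier_mat n n" for w unfolding T_def using adj_mat(1)[OF S_carrier] by simp
  have \<phi>_carrier: "\<phi> w \<in> carrier_mat n n" for w unfolding \<phi>_def using S_carrier[of w] T_carrier[of w] A_carrier
    by (simp add: square_mult_carrier_mat)
  have ST: "S w * T w = 1\<^sub>m n" and TS: "T w * S w = 1\<^sub>m n" for w
    unfolding T_def using adj_mat_inverse[OF S_carrier S_det] by auto
  have spectrum: "spectrum (\<phi> w) = spectrum A" for w
    by (rule spectrum_similar, rule similar_matI[of "\<phi> w" A "S w" "T w" n])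
      (use \<phi>_carrier A_carrier S_carrier T_carrier ST TS in \<open>auto simp: \<phi>_def\<close>)
  have T0: "T 0 = 1\<^sub>m n" using ST[of 0] T_carrier[of 0] S0 by simp
  have \<phi>0: "\<phi> 0 = A" unfolding \<phi>_def S0 T0 using A_carrier by simp
  have hT: "mat_holomorphic_on n T UNIV"
    unfolding T_def using S_carrier hS S_det by (rule mat_holomorphic_on_inverse)
  have SA: "S w * A \<in> carrier_mat n n" for w using S_carrier[of w] A_carrier by simp
  have "mat_holomorphic_on n (\<lambda>w. S w * A) UNIV"
    by (rule mat_holomorphic_on_mult[OF S_carrier _ hS]) (use A_carrier in \<open>auto simp: mat_holomorphic_on_def\<close>)
  then have h\<phi>: "mat_holomorphic_on n \<phi> UNIV"
    unfolding \<phi>_def by (rule mat_holomorphic_on_mult[OF SA T_carrier _ hT])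
  have "mat_deriv n \<phi> 0 = X * A - A * X"
  proof (rule conjugation_curve_deriv[of A n X "mat_deriv n \<phi> 0" \<phi> S])
    show "mat_deriv n \<phi> 0 \<in> carrier_mat n n" unfolding mat_deriv_def by simp
    show "\<phi> w * S w = S w * A" for w
      unfolding \<phi>_def using S_carrier[of w] T_carrier[of w] A_carrier TS[of w]
      by (simp add: assoc_mult_mat[of _ n n _ n _ n])
    show "mat_has_deriv n \<phi> (mat_deriv n \<phi> 0) 0" by (rule mat_holomorphic_on_has_deriv[OF h\<phi>]) auto
  qed (use A_carrier X \<phi>_carrier S_carrier \<phi>0 S0 dS in auto)
  moreover have "\<phi> w \<in> Omega n" for w
    using A \<phi>_carrier spectrum[of w] unfolding Omega_def spectral_radius_def by auto
  ultimately show ?thesis using h\<phi> \<phi>0 spectrum by blast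
qed

theorem proposition6:
  fixes n :: nat and A B :: "complex mat"
  assumes "A \<in> Omega n" and "non_derogatory A" and "B \<in> carrier_mat n n"
    and "kobayashi n (Omega n) A B = 0"
  shows "\<exists>\<phi>. mat_holomorphic_on n \<phi> UNIV \<and> (\<forall>w. \<phi> w \<in> Omega n) \<and>
           \<phi> 0 = A \<and> mat_deriv n \<phi> 0 = B \<and> (\<forall>w. spectrum (\<phi> w) = spectrum A)"
proof -
  have A: "A \<in> carrier_mat n n" using assms(1) unfolding Omega_def by auto
  obtain v where v: "v \<in> carrier_vec n" and det: "det (krylov_mat A v) \<noteq> 0"
    using non_derogatory_krylov_det_nonzero[OF A assms(2)] by blast
  have "mat_trace (A ^\<^sub>m s * B) = 0" for s
    by (rule kobayashi_zero_imp_trace_zero[OF assms(1,3,4)])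
  then obtain X where X: "X \<in> carrier_mat n n" and XB: "X * A - A * X = B"
    using commutator_eq_solvable_krylov[OF A v assms(3) det] by blast
  have "\<exists>\<phi>. mat_holomorphic_on n \<phi> UNIV \<and> (\<forall>w. \<phi> w \<in> Omega n) \<and>
           \<phi> 0 = A \<and> mat_deriv n \<phi> 0 = X * A - A * X \<and> (\<forall>w. spectrum (\<phi> w) = spectrum A)"
    by (rule isospectral_conjugation_curve[OF assms(1) X, where S = "ldu_curve n X"])
      (simp_all add: det_ldu_curve_nonzero ldu_curve_holomorphic ldu_curve_0 ldu_curve_has_deriv X)
  then show ?thesis unfolding XB .
qed

end
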